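(* Consider noisy group testing under reverse $Z$-channel noise with parameter $\rho\in(0,1)$, $k=\Theta(p^\theta)$ defectives with $\theta\in(0,1)$, and i.i.d. Bernoulli testing with parameter $\nu>0$. For fixed $\beta\in(\rho,1)$, consider the following noisy DD algorithm: (1) let $\widehat{\mathrm{PD}}$ be the set of items $j$ that appear in no negative test; (2) for $j\in\widehat{\mathrm{PD}}$ let $\tilde N_{\rm pos}(j)$ be the number of positive tests that contain $j$ and no other item of $\widehat{\mathrm{PD}}$, and output $\hat S=\{j\in\widehat{\mathrm{PD}}:\tilde N_{\rm pos}(j)\ge \beta n\nu e^{-\nu}/k\}$. Then for any $\beta\in(\rho,1)$ and $\xi\in(0,\theta)$, this algorithm achieves $P_e\to0$ as long as $n\ge n_{\rm DD}(1+\eta)$ for an arbitrarily small fixed $\eta>0$, where $n_{\rm DD}=\max\{n_1^{(ND)},n_2^{(D)},n_2^{(ND)}\}$ with $$n_1^{(ND)}=\frac{1-\xi}{(1-\rho)\nu e^{-\nu}}\,k\log p,\qquad n_2^{(D)}=\frac{1}{\nu e^{-\nu}D_1(\beta)}\,k\log k,\qquad n_2^{(ND)}=\frac{\xi}{\nu e^{-\nu}\rho D_1(\beta/\rho)}\,k\log p.$$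
   Context: Setup: $p$ items, unknown defective set $S$ uniform among size-$k$ subsets of $\{1,\dots,p\}$, $p\to\infty$. Test matrix $\mathbf X\in\{0,1\}^{n\times p}$ with i.i.d. Bernoulli$(\nu/k)$ entries ($X_{ij}=1$ iff item $j$ is in test $i$). Noiseless outcome $U_i=\bigvee_{j\in S}X_{ij}$; observed outcome $Y_i$ obtained by passing $U_i$ independently through the reverse $Z$-channel: $P(Y=1|U=0)=\rho$, $P(Y=0|U=0)=1-\rho$, $P(Y=1|U=1)=1$. Test $i$ is positive if $Y_i=1$ and negative if $Y_i=0$. $P_e=\mathbb P[\hat S\ne S]$. Natural logarithms. For $\gamma>0$ and $t\ge0$, $D_\gamma(t)=t\log(t/\gamma)-t+\gamma$. *)

theory Defs
  imports "HOL-Probability.Probability" "HOL-Library.Landau_Symbols"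
begin

text \<open>Items are indexed by 0..<p, tests by 0..<n.  A test matrix is X :: nat \<times> nat \<Rightarrow> bool,
  X (i,j) = True iff item j is in test i.\<close>

definition D_gamma :: "real \<Rightarrow> real \<Rightarrow> real" where
  "D_gamma \<gamma> t = t * ln (t / \<gamma>) - t + \<gamma>"

definition ksubsets :: "nat \<Rightarrow> nat \<Rightarrow> nat set set" where
  "ksubsets p k = {S. S \<subseteq> {..<p} \<and> card S = k}"

definition noiseless_outcome :: "nat set \<Rightarrow> (nat \<times> nat \<Rightarrow> bool) \<Rightarrow> nat \<Rightarrow> bool" where
  "noiseless_outcome S X i = (\<exists>j\<in>S. X (i, j))"

text \<open>Reverse Z-channel: Y = U or Z where Z_i ~ Bernoulli(rho) i.i.d. (flips 0 to 1 w.p. rho).\<close>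
definition observed_outcome :: "nat set \<Rightarrow> (nat \<times> nat \<Rightarrow> bool) \<Rightarrow> (nat \<Rightarrow> bool) \<Rightarrow> nat \<Rightarrow> bool" where
  "observed_outcome S X Z i = (noiseless_outcome S X i \<or> Z i)"

definition dd_PD :: "nat \<Rightarrow> nat \<Rightarrow> (nat \<times> nat \<Rightarrow> bool) \<Rightarrow> (nat \<Rightarrow> bool) \<Rightarrow> nat set" where
  "dd_PD p n X Y = {j. j < p \<and> (\<forall>i<n. X (i, j) \<longrightarrow> Y i)}"

definition dd_Npos :: "nat \<Rightarrow> nat \<Rightarrow> (nat \<times> nat \<Rightarrow> bool) \<Rightarrow> (nat \<Rightarrow> bool) \<Rightarrow> nat \<Rightarrow> nat" where
  "dd_Npos p n X Y j = card {i. i < n \<and> Y i \<and> X (i, j) \<and>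
      (\<forall>j'\<in>dd_PD p n X Y. j' \<noteq> j \<longrightarrow> \<not> X (i, j'))}"

definition dd_decode :: "nat \<Rightarrow> nat \<Rightarrow> nat \<Rightarrow> real \<Rightarrow> real \<Rightarrow> (nat \<times> nat \<Rightarrow> bool) \<Rightarrow> (nat \<Rightarrow> bool) \<Rightarrow> nat set" where
  "dd_decode p n k \<nu> \<beta> X Y = {j \<in> dd_PD p n X Y.
      real (dd_Npos p n X Y j) \<ge> \<beta> * real n * \<nu> * exp (- \<nu>) / real k}"

definition gt_model :: "nat \<Rightarrow> nat \<Rightarrow> nat \<Rightarrow> real \<Rightarrow> real \<Rightarrow>
    (nat set \<times> (nat \<times> nat \<Rightarrow> bool) \<times> (nat \<Rightarrow> bool)) pmf" where
  "gt_model p k n \<nu> \<rho> =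
     pair_pmf (pmf_of_set (ksubsets p k))
       (pair_pmf (Pi_pmf ({..<n} \<times> {..<p}) False (\<lambda>_. bernoulli_pmf (\<nu> / real k)))
                 (Pi_pmf {..<n} False (\<lambda>_. bernoulli_pmf \<rho>)))"

definition dd_error_prob :: "nat \<Rightarrow> nat \<Rightarrow> nat \<Rightarrow> real \<Rightarrow> real \<Rightarrow> real \<Rightarrow> real" where
  "dd_error_prob p k n \<nu> \<rho> \<beta> =
     measure_pmf.prob (gt_model p k n \<nu> \<rho>)
       {(S, X, Z). dd_decode p n k \<nu> \<beta> X (observed_outcome S X Z) \<noteq> S}"

definition n_DD :: "nat \<Rightarrow> nat \<Rightarrow> real \<Rightarrow> real \<Rightarrow> real \<Rightarrow> real \<Rightarrow> real" where
  "n_DD p k \<nu> \<rho> \<beta> \<xi> =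
     (let c = \<nu> * exp (- \<nu>);
          n1ND = (1 - \<xi>) / ((1 - \<rho>) * c) * real k * ln (real p);
          n2D = 1 / (c * D_gamma 1 \<beta>) * real k * ln (real k);
          n2ND = \<xi> / (c * \<rho> * D_gamma 1 (\<beta> / \<rho>)) * real k * ln (real p)
      in max n1ND (max n2D n2ND))"

end

(*
  Fix the defective set S and write mu = n nu e^-nu / k.  Storing the noise bits Z as an extra
  column p of the test matrix makes (X, Z) a single family of independent coins.  If the decoder
  errs, then (A) a non-defective item lies in at least T = beta mu defective-free tests, all of them
  turned positive by noise; or (C) a defective item is the only defective in fewer than a = beta' mu
  tests; or (W) more than M = p^xi' non-defectives survive step 1; or (I) a defective item shares
  more than b = (beta' - beta) mu tests with at most M surviving non-defectives.  Since
  a - b = T, one of the four must happen.  The events (A), (C), (I) are bounded by exponential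
  moments, which factor over the independent rows of the matrix, and (W) by Markov's inequality.
  Under n >= (1 + eta) n_DD the four bounds decay like p^(-eta/2), k^(-eta/4), p^(xi - xi') and 1/k.
*)
theory Submission
  imports Defs "HOL-Real_Asymp.Real_Asymp"
begin

section \<open>Products of Bernoulli coins\<close>

lemma finite_set_Pi_pmf_bool:
  fixes q :: "'a \<Rightarrow> bool pmf"
  assumes "finite A"
  shows "finite (set_pmf (Pi_pmf A d q))"
proof -
  have "set_pmf (Pi_pmf A d q) \<subseteq> PiE_dflt A d (\<lambda>_. UNIV)"
    using set_Pi_pmf_subset'[OF assms, of d q] by (auto simp: PiE_dflt_def)
  moreover have "finite (PiE_dflt A d (\<lambda>_. UNIV :: bool set))"
    using assms by (intro finite_PiE_dflt) auto
  ultimately show ?thesis by (rule finite_subset)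
qed

lemma expectation_pair_pmf:
  fixes f :: "'a \<times> 'b \<Rightarrow> real"
  assumes "finite (set_pmf A)" "finite (set_pmf B)"
  shows "measure_pmf.expectation (pair_pmf A B) f =
         measure_pmf.expectation A (\<lambda>a. measure_pmf.expectation B (\<lambda>b. f (a, b)))"
proof -
  have "measure_pmf.expectation (pair_pmf A B) f = (\<Sum>ab\<in>set_pmf A \<times> set_pmf B. f ab * pmf (pair_pmf A B) ab)"
    using assms by (intro integral_measure_pmf_real) auto
  also have "\<dots> = (\<Sum>a\<in>set_pmf A. \<Sum>b\<in>set_pmf B. f (a,b) * (pmf A a * pmf B b))"
    by (subst sum.cartesian_product) (auto intro!: sum.cong simp: pmf_pair)
  also have "\<dots> = (\<Sum>a\<in>set_pmf A. (\<Sum>b\<in>set_pmf B. f (a,b) * pmf B b) * pmf A a)"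
    by (simp add: sum_distrib_right sum_distrib_left mult_ac)
  also have "\<dots> = measure_pmf.expectation A (\<lambda>a. measure_pmf.expectation B (\<lambda>b. f (a, b)))"
    using assms by (subst integral_measure_pmf_real[where A="set_pmf A"]) (auto simp: integral_measure_pmf_real[where A="set_pmf B"])
  finally show ?thesis .
qed

lemma expectation_Pi_pmf_restrict:
  fixes q :: "'a \<Rightarrow> bool pmf" and g :: "('a \<Rightarrow> bool) \<Rightarrow> real"
  assumes "finite A" "B \<subseteq> A" "\<And>f f'. (\<And>x. x \<in> B \<Longrightarrow> f x = f' x) \<Longrightarrow> g f = g f'"
  shows "measure_pmf.expectation (Pi_pmf A d q) g = measure_pmf.expectation (Pi_pmf B d q) g"
proof -
  have "Pi_pmf B d q = map_pmf (\<lambda>f x. if x \<in> B then f x else d) (Pi_pmf A d q)"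
    using assms by (intro Pi_pmf_subset)
  then have "measure_pmf.expectation (Pi_pmf B d q) g =
      measure_pmf.expectation (Pi_pmf A d q) (\<lambda>f. g (\<lambda>x. if x \<in> B then f x else d))" by simp
  also have "\<dots> = measure_pmf.expectation (Pi_pmf A d q) g"
    by (intro Bochner_Integration.integral_cong refl assms(3)) auto
  finally show ?thesis ..
qed

lemma expectation_Pi_pmf_union:
  fixes q :: "'a \<Rightarrow> bool pmf" and H :: "('a \<Rightarrow> bool) \<Rightarrow> real"
  assumes "finite A" "finite B" "A \<inter> B = {}"
  shows "measure_pmf.expectation (Pi_pmf (A \<union> B) d q) H =
    measure_pmf.expectation (Pi_pmf A d q) (\<lambda>f. measure_pmf.expectation (Pi_pmf B d q)
        (\<lambda>g. H (\<lambda>x. if x \<in> A then f x else g x)))"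
proof -
  have "measure_pmf.expectation (Pi_pmf (A \<union> B) d q) H =
     measure_pmf.expectation (pair_pmf (Pi_pmf A d q) (Pi_pmf B d q)) (\<lambda>(f,g). H (\<lambda>x. if x \<in> A then f x else g x))"
    by (subst Pi_pmf_union[OF assms]) (simp add: case_prod_unfold)
  also have "\<dots> = measure_pmf.expectation (Pi_pmf A d q) (\<lambda>f. measure_pmf.expectation (Pi_pmf B d q)
        (\<lambda>g. H (\<lambda>x. if x \<in> A then f x else g x)))"
    using assms by (subst expectation_pair_pmf) (auto intro!: finite_set_Pi_pmf_bool)
  finally show ?thesis .
qed

lemma expectation_Pi_pmf_union_le:
  fixes q :: "'a \<Rightarrow> bool pmf" and H :: "('a \<Rightarrow> bool) \<Rightarrow> real"
  assumes "finite A" "finite B" "A \<inter> B = {}"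
    and "\<And>f. measure_pmf.expectation (Pi_pmf B d q) (\<lambda>g. H (\<lambda>x. if x \<in> A then f x else g x)) \<le> c f"
  shows "measure_pmf.expectation (Pi_pmf (A \<union> B) d q) H \<le> measure_pmf.expectation (Pi_pmf A d q) c"
proof -
  have "finite (set_pmf (Pi_pmf A d q))"
    using assms(1) by (rule finite_set_Pi_pmf_bool)
  then show ?thesis
    unfolding expectation_Pi_pmf_union[OF assms(1-3)]
    by (intro integral_mono integrable_measure_pmf_finite assms(4))
qed

lemma expectation_Pi_pmf_prod_blocks:
  fixes q :: "'a \<Rightarrow> bool pmf" and g :: "'b \<Rightarrow> ('a \<Rightarrow> bool) \<Rightarrow> real"
  assumes "finite I" "finite A" "\<And>b. b \<in> I \<Longrightarrow> Bl b \<subseteq> A" "disjoint_family_on Bl I"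
    and "\<And>b f f'. b \<in> I \<Longrightarrow> (\<And>x. x \<in> Bl b \<Longrightarrow> f x = f' x) \<Longrightarrow> g b f = g b f'"
  shows "measure_pmf.expectation (Pi_pmf A d q) (\<lambda>f. \<Prod>b\<in>I. g b f) =
         (\<Prod>b\<in>I. measure_pmf.expectation (Pi_pmf A d q) (g b))"
  using assms
proof (induction I arbitrary: A rule: finite_induct)
  case empty
  then show ?case by simp
next
  case (insert b I)
  let ?E = "measure_pmf.expectation"
  let ?m = "\<lambda>f h x. if x \<in> Bl b then f x else h x"
  have Bb: "Bl b \<subseteq> A" using insert.prems(2) by blast
  have A: "Pi_pmf A d q = Pi_pmf (Bl b \<union> (A - Bl b)) d q" using Bb by (simp add: Un_absorb1)
  have fin: "finite (Bl b)" "finite (A - Bl b)" using Bb insert.prems(1) finite_subset by auto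
  have others: "Bl c \<subseteq> A - Bl b" if "c \<in> I" for c
    using insert.prems(2,3) that insert.hyps(2) unfolding disjoint_family_on_def by fastforce
  have local_b: "g b (?m f h) = g b f" for f h
    by (rule insert.prems(4)) auto
  have local_c: "g c (?m f h) = g c h" if "c \<in> I" for c f h
    by (rule insert.prems(4)) (use others[OF that] that in auto)
  have "?E (Pi_pmf A d q) (\<lambda>f. \<Prod>c\<in>insert b I. g c f) =
        ?E (Pi_pmf (Bl b \<union> (A - Bl b)) d q) (\<lambda>f. g b f * (\<Prod>c\<in>I. g c f))"
    unfolding A prod.insert[OF insert.hyps] ..
  also have "\<dots> = ?E (Pi_pmf (Bl b) d q) (\<lambda>f. ?E (Pi_pmf (A - Bl b) d q)
        (\<lambda>h. g b (?m f h) * (\<Prod>c\<in>I. g c (?m f h))))"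
    by (rule expectation_Pi_pmf_union[OF fin]) blast
  also have "\<dots> = ?E (Pi_pmf (Bl b) d q) (\<lambda>f. ?E (Pi_pmf (A - Bl b) d q)
        (\<lambda>h. g b f * (\<Prod>c\<in>I. g c h)))"
    using local_b local_c by (intro Bochner_Integration.integral_cong refl prod.cong) auto
  also have "\<dots> = ?E (Pi_pmf (Bl b) d q) (\<lambda>f. g b f * ?E (Pi_pmf (A - Bl b) d q)
        (\<lambda>h. \<Prod>c\<in>I. g c h))"
    by simp
  also have "\<dots> = ?E (Pi_pmf (Bl b) d q) (g b) * ?E (Pi_pmf (A - Bl b) d q) (\<lambda>h. \<Prod>c\<in>I. g c h)"
    by simp
  also have "?E (Pi_pmf (A - Bl b) d q) (\<lambda>h. \<Prod>c\<in>I. g c h) =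
      (\<Prod>c\<in>I. ?E (Pi_pmf (A - Bl b) d q) (g c))"
  proof (rule insert.IH)
    show "disjoint_family_on Bl I"
      using insert.prems(3) unfolding disjoint_family_on_def by blast
  qed (use fin others insert.prems(4) in blast)+
  also have "\<dots> = (\<Prod>c\<in>I. ?E (Pi_pmf A d q) (g c))"
  proof (rule prod.cong[OF refl])
    fix c assume c: "c \<in> I"
    show "?E (Pi_pmf (A - Bl b) d q) (g c) = ?E (Pi_pmf A d q) (g c)"
    proof (rule expectation_Pi_pmf_restrict[symmetric, OF insert.prems(1)])
      fix f f' :: "'a \<Rightarrow> bool" assume "\<And>x. x \<in> A - Bl b \<Longrightarrow> f x = f' x"
      then show "g c f = g c f'"
        using others[OF c] by (intro insert.prems(4)[OF insertI2[OF c]]) blast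
    qed blast
  qed
  also have "?E (Pi_pmf (Bl b) d q) (g b) = ?E (Pi_pmf A d q) (g b)"
    by (rule expectation_Pi_pmf_restrict[symmetric, OF insert.prems(1) Bb]) (rule insert.prems(4), auto)
  finally show ?case by (simp only: prod.insert[OF insert.hyps])
qed

lemma measure_Pi_pmf_cylinder:
  fixes q :: "'a \<Rightarrow> bool pmf"
  assumes "finite U" "T \<subseteq> U" "F \<subseteq> U" "T \<inter> F = {}"
  shows "measure_pmf.prob (Pi_pmf U d q) {W. (\<forall>c\<in>T. W c) \<and> (\<forall>c\<in>F. \<not> W c)} =
         (\<Prod>c\<in>T. pmf (q c) True) * (\<Prod>c\<in>F. pmf (q c) False)"
proof -
  define B where "B c = (if c \<in> T then {True} else if c \<in> F then {False} else UNIV)" for c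
  have fin: "finite T" "finite F" "finite (U - T - F)"
    using assms finite_subset by auto
  have U: "U = T \<union> F \<union> (U - T - F)"
    using assms by auto
  have "{W. (\<forall>c\<in>T. W c) \<and> (\<forall>c\<in>F. \<not> W c)} = Pi U B"
    using assms(2-4) by (auto simp: B_def Pi_def split: if_splits)
  then have "measure_pmf.prob (Pi_pmf U d q) {W. (\<forall>c\<in>T. W c) \<and> (\<forall>c\<in>F. \<not> W c)} =
      (\<Prod>c\<in>U. measure_pmf.prob (q c) (B c))"
    using assms(1) by (simp add: measure_Pi_pmf_Pi)
  also have "\<dots> = (\<Prod>c\<in>T. measure_pmf.prob (q c) (B c)) * (\<Prod>c\<in>F. measure_pmf.prob (q c) (B c))
      * (\<Prod>c\<in>U - T - F. measure_pmf.prob (q c) (B c))"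
  proof -
    have "(\<Prod>c\<in>T \<union> F \<union> (U - T - F). measure_pmf.prob (q c) (B c)) =
        (\<Prod>c\<in>T \<union> F. measure_pmf.prob (q c) (B c)) * (\<Prod>c\<in>U - T - F. measure_pmf.prob (q c) (B c))"
      using fin by (intro prod.union_disjoint) auto
    also have "(\<Prod>c\<in>T \<union> F. measure_pmf.prob (q c) (B c)) =
        (\<Prod>c\<in>T. measure_pmf.prob (q c) (B c)) * (\<Prod>c\<in>F. measure_pmf.prob (q c) (B c))"
      using fin assms(4) by (intro prod.union_disjoint) auto
    finally show ?thesis by (subst U)
  qed
  also have "(\<Prod>c\<in>U - T - F. measure_pmf.prob (q c) (B c)) = 1"
    by (intro prod.neutral) (auto simp: B_def)
  also have "(\<Prod>c\<in>T. measure_pmf.prob (q c) (B c)) = (\<Prod>c\<in>T. pmf (q c) True)"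
    by (intro prod.cong) (auto simp: B_def measure_pmf_single)
  also have "(\<Prod>c\<in>F. measure_pmf.prob (q c) (B c)) = (\<Prod>c\<in>F. pmf (q c) False)"
    using assms(4) by (intro prod.cong) (auto simp: B_def measure_pmf_single)
  finally show ?thesis by simp
qed

lemma prob_le_expectation:
  fixes f :: "'a \<Rightarrow> real"
  assumes "finite (set_pmf M)" "\<And>x. 0 \<le> f x" "\<And>x. x \<in> A \<Longrightarrow> 1 \<le> f x"
  shows "measure_pmf.prob M A \<le> measure_pmf.expectation M f"
proof -
  have "measure_pmf.prob M A = measure_pmf.expectation M (indicator A)"
    by simp
  also have "\<dots> \<le> measure_pmf.expectation M f"
    using assms by (intro integral_mono integrable_measure_pmf_finite) (auto simp: indicator_def)
  finally show ?thesis .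
qed

lemma expectation_affine_indicator:
  assumes "finite (set_pmf M)"
  shows "measure_pmf.expectation M (\<lambda>x. a + b * of_bool (P x)) = a + b * measure_pmf.prob M {x. P x}"
proof -
  have "measure_pmf.expectation M (\<lambda>x. a + b * of_bool (P x)) =
      measure_pmf.expectation M (\<lambda>x. a + b * indicator {x. P x} x)"
    by (intro Bochner_Integration.integral_cong) (auto simp: indicator_def)
  also have "\<dots> = a + b * measure_pmf.prob M {x. P x}"
    using assms by (subst Bochner_Integration.integral_add) (auto intro: integrable_measure_pmf_finite)
  finally show ?thesis .
qed

lemma expectation_affine_indicator2:
  assumes "finite (set_pmf M)"
  shows "measure_pmf.expectation M (\<lambda>x. a + b * of_bool (P x) + c * of_bool (R x)) =
     a + b * measure_pmf.prob M {x. P x} + c * measure_pmf.prob M {x. R x}"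
proof -
  have "measure_pmf.expectation M (\<lambda>x. a + b * of_bool (P x) + c * of_bool (R x)) =
      measure_pmf.expectation M (\<lambda>x. (a + b * of_bool (P x)) + c * indicator {x. R x} x)"
    by (intro Bochner_Integration.integral_cong) (auto simp: indicator_def)
  also have "\<dots> = measure_pmf.expectation M (\<lambda>x. a + b * of_bool (P x)) + c * measure_pmf.prob M {x. R x}"
    using assms by (subst Bochner_Integration.integral_add) (auto intro: integrable_measure_pmf_finite)
  finally show ?thesis
    using assms by (simp add: expectation_affine_indicator)
qed

lemma prob_Bex_le_sum:
  assumes "finite J"
  shows "measure_pmf.prob M {x. \<exists>j\<in>J. P j x} \<le> (\<Sum>j\<in>J. measure_pmf.prob M {x. P j x})"
proof -
  have "{x. \<exists>j\<in>J. P j x} = (\<Union>j\<in>J. {x. P j x})" by auto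
  then show ?thesis
    using assms by (simp add: measure_pmf.finite_measure_subadditive_finite)
qed

lemma prob_disj4_le:
  "measure_pmf.prob M {x. P1 x \<or> P2 x \<or> P3 x \<or> P4 x} \<le>
   measure_pmf.prob M {x. P1 x} + measure_pmf.prob M {x. P2 x} + measure_pmf.prob M {x. P3 x} + measure_pmf.prob M {x. P4 x}"
proof -
  have e: "{x. P1 x \<or> P2 x \<or> P3 x \<or> P4 x} = {x. P1 x} \<union> ({x. P2 x} \<union> ({x. P3 x} \<union> {x. P4 x}))" by auto
  have u: "measure_pmf.prob M (A \<union> B) \<le> measure_pmf.prob M A + measure_pmf.prob M B" for A B
    by (rule measure_Un_le) simp_all
  have "measure_pmf.prob M ({x. P1 x} \<union> ({x. P2 x} \<union> ({x. P3 x} \<union> {x. P4 x})))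
     \<le> measure_pmf.prob M {x. P1 x} + measure_pmf.prob M ({x. P2 x} \<union> ({x. P3 x} \<union> {x. P4 x}))" by (rule u)
  also have "\<dots> \<le> measure_pmf.prob M {x. P1 x} + (measure_pmf.prob M {x. P2 x} + measure_pmf.prob M ({x. P3 x} \<union> {x. P4 x}))"
    using u by (rule add_left_mono)
  also have "\<dots> \<le> measure_pmf.prob M {x. P1 x} + (measure_pmf.prob M {x. P2 x} + (measure_pmf.prob M {x. P3 x} + measure_pmf.prob M {x. P4 x}))"
    using u by (intro add_left_mono)
  finally show ?thesis unfolding e by (simp add: add.assoc)
qed

section \<open>The test design as one family of coins\<close>

text \<open>Cell \<open>(i, j)\<close> with \<open>j < p\<close> says whether item \<open>j\<close> is in test \<open>i\<close>; cell \<open>(i, p)\<close> is the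
  noise bit \<open>Z i\<close> of test \<open>i\<close>.\<close>

definition test_cells :: "nat \<Rightarrow> nat \<Rightarrow> (nat \<times> nat) set" where
  "test_cells n p = {..<n} \<times> {..p}"

definition cell_pmf :: "nat \<Rightarrow> real \<Rightarrow> real \<Rightarrow> nat \<times> nat \<Rightarrow> bool pmf" where
  "cell_pmf p x \<rho> c = (if snd c = p then bernoulli_pmf \<rho> else bernoulli_pmf x)"

definition split_noise :: "nat \<Rightarrow> (nat \<times> nat \<Rightarrow> bool) \<Rightarrow> (nat \<times> nat \<Rightarrow> bool) \<times> (nat \<Rightarrow> bool)" where
  "split_noise p W = ((\<lambda>c. if snd c < p then W c else False), (\<lambda>i. W (i, p)))"

definition dd_fails :: "nat \<Rightarrow> nat \<Rightarrow> nat \<Rightarrow> real \<Rightarrow> real \<Rightarrow> nat set \<Rightarrow> (nat \<times> nat \<Rightarrow> bool) \<Rightarrow> bool" where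
  "dd_fails p n k \<nu> \<beta> S W \<longleftrightarrow>
     (case split_noise p W of (X, Z) \<Rightarrow> dd_decode p n k \<nu> \<beta> X (observed_outcome S X Z) \<noteq> S)"

lemma finite_set_pmf_test_cells: "finite (set_pmf (Pi_pmf (test_cells n p) False q))"
  by (intro finite_set_Pi_pmf_bool) (simp add: test_cells_def)

lemma pair_Pi_pmf_eq_map_split_noise:
  "pair_pmf (Pi_pmf ({..<n} \<times> {..<p}) False (\<lambda>_. bernoulli_pmf x)) (Pi_pmf {..<n} False (\<lambda>_. bernoulli_pmf \<rho>))
   = map_pmf (split_noise p) (Pi_pmf (test_cells n p) False (cell_pmf p x \<rho>))"
proof -
  define A where "A = {..<n} \<times> {..<p}"
  define B where "B = {..<n} \<times> {p}"
  let ?Q = "cell_pmf p x \<rho>"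
  have U: "test_cells n p = A \<union> B" by (auto simp: test_cells_def A_def B_def)
  have fin: "finite A" "finite B" "A \<inter> B = {}" by (auto simp: A_def B_def)
  have "map_pmf (split_noise p) (Pi_pmf (test_cells n p) False ?Q) =
        map_pmf (split_noise p) (map_pmf (\<lambda>(f, g) x. if x \<in> A then f x else g x)
          (pair_pmf (Pi_pmf A False ?Q) (Pi_pmf B False ?Q)))"
    unfolding U by (subst Pi_pmf_union[OF fin]) rule
  also have "\<dots> = map_pmf (\<lambda>(f, g). (f, \<lambda>i. g (i, p))) (pair_pmf (Pi_pmf A False ?Q) (Pi_pmf B False ?Q))"
    unfolding pmf.map_comp
  proof (intro map_pmf_cong refl)
    fix fg assume "fg \<in> set_pmf (pair_pmf (Pi_pmf A False ?Q) (Pi_pmf B False ?Q))"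
    then obtain f g where fg: "fg = (f, g)" "f \<in> set_pmf (Pi_pmf A False ?Q)" "g \<in> set_pmf (Pi_pmf B False ?Q)"
      by (cases fg) auto
    have "f c = False" if "c \<notin> A" for c
      using set_Pi_pmf_subset[OF fin(1), of False ?Q] fg(2) that by blast
    moreover have "g c = False" if "c \<notin> B" for c
      using set_Pi_pmf_subset[OF fin(2), of False ?Q] fg(3) that by blast
    ultimately show "(split_noise p \<circ> (\<lambda>(f, g) x. if x \<in> A then f x else g x)) fg = (\<lambda>(f, g). (f, \<lambda>i. g (i, p))) fg"
      unfolding fg by (auto simp: split_noise_def fun_eq_iff A_def B_def)
  qed
  also have "\<dots> = pair_pmf (map_pmf id (Pi_pmf A False ?Q)) (map_pmf (\<lambda>g i. g (i, p)) (Pi_pmf B False ?Q))"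
    by (subst map_pair[symmetric]) (simp add: case_prod_unfold)
  also have "Pi_pmf A False ?Q = Pi_pmf A False (\<lambda>_. bernoulli_pmf x)"
    by (intro Pi_pmf_cong) (auto simp: cell_pmf_def A_def)
  also have "Pi_pmf B False ?Q = Pi_pmf B False (\<lambda>_. bernoulli_pmf \<rho>)"
    by (intro Pi_pmf_cong) (auto simp: cell_pmf_def B_def)
  also have "map_pmf (\<lambda>g i. g (i, p)) (Pi_pmf B False (\<lambda>_. bernoulli_pmf \<rho>)) =
      Pi_pmf {..<n} False (\<lambda>_. bernoulli_pmf \<rho>)"
  proof -
    have "Pi_pmf {..<n} False (\<lambda>_. bernoulli_pmf \<rho>) =
        map_pmf (\<lambda>g. g \<circ> (\<lambda>i. (i, p))) (Pi_pmf B False (\<lambda>_. bernoulli_pmf \<rho>))"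
      by (rule Pi_pmf_bij_betw) (auto simp: B_def bij_betw_def inj_on_def)
    then show ?thesis by (simp add: o_def)
  qed
  finally show ?thesis by (simp add: A_def)
qed

lemma dd_error_prob_le_of_conditional:
  assumes nonempty: "ksubsets p k \<noteq> {}"
    and bound: "\<And>S. S \<in> ksubsets p k \<Longrightarrow>
      measure_pmf.prob (Pi_pmf (test_cells n p) False (cell_pmf p (\<nu> / real k) \<rho>)) {W. dd_fails p n k \<nu> \<beta> S W} \<le> b"
  shows "dd_error_prob p k n \<nu> \<rho> \<beta> \<le> b"
proof -
  let ?M = "Pi_pmf (test_cells n p) False (cell_pmf p (\<nu> / real k) \<rho>)"
  let ?XZ = "pair_pmf (Pi_pmf ({..<n} \<times> {..<p}) False (\<lambda>_. bernoulli_pmf (\<nu> / real k)))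
      (Pi_pmf {..<n} False (\<lambda>_. bernoulli_pmf \<rho>))"
  let ?E = "{(S, X, Z). dd_decode p n k \<nu> \<beta> X (observed_outcome S X Z) \<noteq> S}"
  have "finite (ksubsets p k)"
    by (rule finite_subset[of _ "Pow {..<p}"]) (auto simp: ksubsets_def)
  then have finS: "finite (set_pmf (pmf_of_set (ksubsets p k)))"
    using nonempty by simp
  have finXZ: "finite (set_pmf ?XZ)"
    by (auto intro!: finite_set_Pi_pmf_bool)
  have "dd_error_prob p k n \<nu> \<rho> \<beta> = measure_pmf.expectation (pair_pmf (pmf_of_set (ksubsets p k)) ?XZ) (indicator ?E)"
    unfolding dd_error_prob_def gt_model_def by simp
  also have "\<dots> = measure_pmf.expectation (pmf_of_set (ksubsets p k))
      (\<lambda>S. measure_pmf.expectation ?XZ (\<lambda>y. indicator ?E (S, y)))"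
    by (rule expectation_pair_pmf[OF finS finXZ])
  also have "\<dots> \<le> measure_pmf.expectation (pmf_of_set (ksubsets p k)) (\<lambda>S. b)"
  proof (intro integral_mono_AE integrable_measure_pmf_finite finS finXZ)
    show "AE S in pmf_of_set (ksubsets p k). measure_pmf.expectation ?XZ (\<lambda>y. indicator ?E (S, y)) \<le> b"
      unfolding AE_measure_pmf_iff
    proof
      fix S assume S: "S \<in> set_pmf (pmf_of_set (ksubsets p k))"
      have "(\<lambda>y. indicator ?E (S, y)) =
          (indicator {(X, Z). dd_decode p n k \<nu> \<beta> X (observed_outcome S X Z) \<noteq> S} :: _ \<Rightarrow> real)"
        by (auto simp: indicator_def fun_eq_iff)
      then have "measure_pmf.expectation ?XZ (\<lambda>y. indicator ?E (S, y)) =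
          measure_pmf.prob ?XZ {(X, Z). dd_decode p n k \<nu> \<beta> X (observed_outcome S X Z) \<noteq> S}"
        by simp
      also have "\<dots> = measure_pmf.prob ?M {W. dd_fails p n k \<nu> \<beta> S W}"
        unfolding pair_Pi_pmf_eq_map_split_noise by (simp add: dd_fails_def case_prod_unfold vimage_def)
      also have "\<dots> \<le> b"
        using S nonempty \<open>finite (ksubsets p k)\<close> by (intro bound) simp
      finally show "measure_pmf.expectation ?XZ (\<lambda>y. indicator ?E (S, y)) \<le> b" .
    qed
  qed
  also have "\<dots> = b"
    by simp
  finally show ?thesis .
qed

section \<open>Error events of the decoder\<close>

definition avoids :: "nat set \<Rightarrow> (nat \<times> nat \<Rightarrow> bool) \<Rightarrow> nat \<Rightarrow> bool" where
  "avoids S W i \<longleftrightarrow> (\<forall>j\<in>S. \<not> W (i, j))"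

definition clean_tests :: "nat \<Rightarrow> nat set \<Rightarrow> (nat \<times> nat \<Rightarrow> bool) \<Rightarrow> nat \<Rightarrow> nat set" where
  "clean_tests n S W j = {i. i < n \<and> W (i, j) \<and> avoids S W i}"

text \<open>For \<open>j \<notin> S\<close>, \<open>survives n p S W j\<close> means that \<open>j\<close> passes step 1 of the decoder:
  all of its tests without defectives are positive, hence noisy (lemma dd_PD_split_noise).\<close>

definition survives :: "nat \<Rightarrow> nat \<Rightarrow> nat set \<Rightarrow> (nat \<times> nat \<Rightarrow> bool) \<Rightarrow> nat \<Rightarrow> bool" where
  "survives n p S W j \<longleftrightarrow> (\<forall>i\<in>clean_tests n S W j. W (i, p))"

definition spurious :: "nat \<Rightarrow> nat \<Rightarrow> nat set \<Rightarrow> (nat \<times> nat \<Rightarrow> bool) \<Rightarrow> nat set" where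
  "spurious n p S W = {j. j < p \<and> j \<notin> S \<and> survives n p S W j}"

definition false_accept :: "nat \<Rightarrow> nat \<Rightarrow> nat set \<Rightarrow> real \<Rightarrow> (nat \<times> nat \<Rightarrow> bool) \<Rightarrow> nat \<Rightarrow> bool" where
  "false_accept n p S T W j \<longleftrightarrow> T \<le> real (card (clean_tests n S W j)) \<and> survives n p S W j"

definition interfered_tests :: "nat \<Rightarrow> nat \<Rightarrow> nat set \<Rightarrow> (nat \<times> nat \<Rightarrow> bool) \<Rightarrow> nat \<Rightarrow> nat set" where
  "interfered_tests n p S W j = {i. i < n \<and> W (i, j) \<and> (\<exists>j'\<in>spurious n p S W. W (i, j'))}"

lemma fst_split_noise: "fst (split_noise p W) (i, j) \<longleftrightarrow> j < p \<and> W (i, j)"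
  by (simp add: split_noise_def)

lemma observed_outcome_split_noise:
  assumes "S \<subseteq> {..<p}"
  shows "observed_outcome S (fst (split_noise p W)) (snd (split_noise p W)) i \<longleftrightarrow> \<not> avoids S W i \<or> W (i, p)"
  using assms by (auto simp: observed_outcome_def noiseless_outcome_def split_noise_def avoids_def)

lemma dd_PD_split_noise:
  assumes S: "S \<subseteq> {..<p}"
    and X: "X = fst (split_noise p W)" and Y: "Y = observed_outcome S X (snd (split_noise p W))"
  shows "S \<subseteq> dd_PD p n X Y" and "dd_PD p n X Y - S = spurious n p S W"
  using S by (auto simp: X Y dd_PD_def spurious_def survives_def clean_tests_def fst_split_noise
      observed_outcome_split_noise avoids_def)

lemma dd_decode_false_positive:
  assumes S: "S \<subseteq> {..<p}"
    and X: "X = fst (split_noise p W)" and Y: "Y = observed_outcome S X (snd (split_noise p W))"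
    and j: "j \<in> dd_decode p n k \<nu> \<beta> X Y" "j \<notin> S"
  shows "j < p" and "false_accept n p S (\<beta> * real n * \<nu> * exp (- \<nu>) / real k) W j"
proof -
  have PD: "j \<in> dd_PD p n X Y" and many: "\<beta> * real n * \<nu> * exp (- \<nu>) / real k \<le> real (dd_Npos p n X Y j)"
    using j(1) by (auto simp: dd_decode_def)
  then show jp: "j < p"
    by (simp add: dd_PD_def)
  have "{i. i < n \<and> Y i \<and> X (i, j) \<and> (\<forall>j'\<in>dd_PD p n X Y. j' \<noteq> j \<longrightarrow> \<not> X (i, j'))} \<subseteq> clean_tests n S W j"
    using dd_PD_split_noise(1)[OF S X Y, where n = n] j(2) S jp
    by (auto simp: clean_tests_def avoids_def X fst_split_noise subset_iff)
  then have "dd_Npos p n X Y j \<le> card (clean_tests n S W j)"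
    unfolding dd_Npos_def by (intro card_mono) (auto simp: clean_tests_def)
  moreover have "survives n p S W j"
    using dd_PD_split_noise(2)[OF S X Y, where n = n] PD j(2) by (auto simp: spurious_def)
  ultimately show "false_accept n p S (\<beta> * real n * \<nu> * exp (- \<nu>) / real k) W j"
    using many by (auto simp: false_accept_def)
qed

lemma dd_decode_false_negative:
  assumes S: "S \<subseteq> {..<p}"
    and X: "X = fst (split_noise p W)" and Y: "Y = observed_outcome S X (snd (split_noise p W))"
    and j: "j \<in> S" "j \<notin> dd_decode p n k \<nu> \<beta> X Y"
  shows "real (card (clean_tests n (S - {j}) W j))
    < \<beta> * real n * \<nu> * exp (- \<nu>) / real k + real (card (interfered_tests n p S W j))"
proof -
  let ?C = "clean_tests n (S - {j}) W j" and ?I = "interfered_tests n p S W j"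
  have few: "real (dd_Npos p n X Y j) < \<beta> * real n * \<nu> * exp (- \<nu>) / real k"
    using j dd_PD_split_noise(1)[OF S X Y, where n = n] by (auto simp: dd_decode_def)
  have jp: "j < p"
    using j S by auto
  have "?C - ?I \<subseteq> {i. i < n \<and> Y i \<and> X (i, j) \<and> (\<forall>j'\<in>dd_PD p n X Y. j' \<noteq> j \<longrightarrow> \<not> X (i, j'))}"
  proof
    fix i assume i: "i \<in> ?C - ?I"
    have "\<not> X (i, j')" if "j' \<in> dd_PD p n X Y" "j' \<noteq> j" for j'
    proof (cases "j' \<in> S")
      case True
      then show ?thesis
        using i that S by (auto simp: clean_tests_def avoids_def X fst_split_noise subset_iff)
    next
      case False
      then have "j' \<in> spurious n p S W"
        using dd_PD_split_noise(2)[OF S X Y, where n = n] that by auto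
      then show ?thesis
        using i by (auto simp: interfered_tests_def clean_tests_def X fst_split_noise spurious_def)
    qed
    then show "i \<in> {i. i < n \<and> Y i \<and> X (i, j) \<and> (\<forall>j'\<in>dd_PD p n X Y. j' \<noteq> j \<longrightarrow> \<not> X (i, j'))}"
      using i j(1) jp S by (auto simp: clean_tests_def X Y fst_split_noise observed_outcome_split_noise avoids_def)
  qed
  then have "card (?C - ?I) \<le> dd_Npos p n X Y j"
    unfolding dd_Npos_def by (intro card_mono) auto
  moreover have "card ?C \<le> card (?C - ?I) + card ?I"
  proof -
    have "card ?C \<le> card ((?C - ?I) \<union> ?I)"
      by (intro card_mono) (auto simp: clean_tests_def interfered_tests_def)
    then show ?thesis
      using card_Un_le[of "?C - ?I" ?I] by linarith
  qed
  ultimately show ?thesis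
    using few by linarith
qed

lemma dd_fails_cases:
  assumes S: "S \<subseteq> {..<p}"
    and threshold: "\<beta> * real n * \<nu> * exp (- \<nu>) / real k \<le> a - b"
    and fails: "dd_fails p n k \<nu> \<beta> S W"
  shows "(\<exists>j\<in>{..<p} - S. false_accept n p S (\<beta> * real n * \<nu> * exp (- \<nu>) / real k) W j) \<or>
         (\<exists>j\<in>S. real (card (clean_tests n (S - {j}) W j)) < a) \<or>
         M < real (card (spurious n p S W)) \<or>
         (\<exists>j\<in>S. b < real (card (interfered_tests n p S W j)) \<and> real (card (spurious n p S W)) \<le> M)"
proof -
  define X where "X = fst (split_noise p W)"
  define Y where "Y = observed_outcome S X (snd (split_noise p W))"
  have decode: "dd_decode p n k \<nu> \<beta> X Y \<noteq> S"
    using fails by (simp add: dd_fails_def X_def Y_def case_prod_unfold)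
  show ?thesis
  proof (cases "dd_decode p n k \<nu> \<beta> X Y \<subseteq> S")
    case False
    then show ?thesis
      using dd_decode_false_positive[OF S X_def Y_def] by blast
  next
    case True
    then obtain j where "j \<in> S" "j \<notin> dd_decode p n k \<nu> \<beta> X Y"
      using decode by blast
    then show ?thesis
      using dd_decode_false_negative[OF S X_def Y_def] threshold
      by (cases "M < real (card (spurious n p S W))") force+
  qed
qed

section \<open>Exponential moment bounds\<close>

lemma avoids_cong_row:
  assumes "S \<subseteq> {..<p}" "\<And>j. j \<le> p \<Longrightarrow> W (i, j) = W' (i, j)"
  shows "avoids S W i \<longleftrightarrow> avoids S W' i"
  using assms(1) assms(2)[OF less_imp_le] by (auto simp: avoids_def subset_iff)

lemma prod_if_eq_power:
  fixes s :: real
  assumes "finite A"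
  shows "(\<Prod>i\<in>A. if P i then s else 1) = s ^ card {i\<in>A. P i}"
proof -
  have "(\<Prod>i\<in>A. if P i then s else 1) = (\<Prod>i\<in>{i\<in>A. P i}. s)"
    using assms by (subst prod.inter_filter[symmetric]) auto
  then show ?thesis by simp
qed

lemma expectation_prod_rows:
  fixes g :: "nat \<Rightarrow> (nat \<times> nat \<Rightarrow> bool) \<Rightarrow> real"
  assumes "\<And>i W W'. i < n \<Longrightarrow> (\<And>j. j \<le> p \<Longrightarrow> W (i, j) = W' (i, j)) \<Longrightarrow> g i W = g i W'"
  shows "measure_pmf.expectation (Pi_pmf (test_cells n p) False q) (\<lambda>W. \<Prod>i<n. g i W) =
         (\<Prod>i<n. measure_pmf.expectation (Pi_pmf (test_cells n p) False q) (g i))"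
proof (rule expectation_Pi_pmf_prod_blocks[where Bl = "\<lambda>i. {i} \<times> {..p}"])
  fix i :: nat and W W' :: "nat \<times> nat \<Rightarrow> bool"
  assume "i \<in> {..<n}" "\<And>c. c \<in> {i} \<times> {..p} \<Longrightarrow> W c = W' c"
  then show "g i W = g i W'"
    by (intro assms) auto
qed (auto simp: test_cells_def disjoint_family_on_def)

lemma prob_le_prod_row_expectations:
  fixes g :: "nat \<Rightarrow> (nat \<times> nat \<Rightarrow> bool) \<Rightarrow> real"
  assumes "\<And>i W W'. i < n \<Longrightarrow> (\<And>j. j \<le> p \<Longrightarrow> W (i, j) = W' (i, j)) \<Longrightarrow> g i W = g i W'"
    and "\<And>i W. 0 \<le> g i W" "0 < c" "\<And>W. W \<in> E \<Longrightarrow> c \<le> (\<Prod>i<n. g i W)"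
  shows "measure_pmf.prob (Pi_pmf (test_cells n p) False q) E \<le>
         (\<Prod>i<n. measure_pmf.expectation (Pi_pmf (test_cells n p) False q) (g i)) / c"
proof -
  let ?M = "Pi_pmf (test_cells n p) False q"
  have "measure_pmf.prob ?M E \<le> measure_pmf.expectation ?M (\<lambda>W. (\<Prod>i<n. g i W) / c)"
  proof (rule prob_le_expectation[OF finite_set_pmf_test_cells])
    show "0 \<le> (\<Prod>i<n. g i W) / c" for W
      using assms(2,3) by (simp add: prod_nonneg)
    show "1 \<le> (\<Prod>i<n. g i W) / c" if "W \<in> E" for W
      using assms(3) assms(4)[OF that] by simp
  qed
  also have "\<dots> = measure_pmf.expectation ?M (\<lambda>W. \<Prod>i<n. g i W) / c"
    by simp
  finally show ?thesis
    by (simp only: expectation_prod_rows[OF assms(1)])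
qed

lemma pmf_cell_pmf_item:
  "j \<noteq> p \<Longrightarrow> 0 \<le> x \<Longrightarrow> x \<le> 1 \<Longrightarrow> pmf (cell_pmf p x \<rho> (i, j)) z = (if z then x else 1 - x)"
  by (simp add: cell_pmf_def)

lemma pmf_cell_pmf_noise:
  "0 \<le> \<rho> \<Longrightarrow> \<rho> \<le> 1 \<Longrightarrow> pmf (cell_pmf p x \<rho> (i, p)) z = (if z then \<rho> else 1 - \<rho>)"
  by (simp add: cell_pmf_def)

lemma prod_cell_pmf_False_row:
  assumes "S' \<subseteq> {..<p}" "0 \<le> x" "x \<le> 1"
  shows "(\<Prod>c\<in>{i} \<times> S'. pmf (cell_pmf p x \<rho> c) False) = (1 - x) ^ card S'"
proof -
  have "{i} \<times> S' = Pair i ` S'"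
    by auto
  then have "(\<Prod>c\<in>{i} \<times> S'. pmf (cell_pmf p x \<rho> c) False) = (\<Prod>j\<in>S'. pmf (cell_pmf p x \<rho> (i, j)) False)"
    by (simp add: prod.reindex inj_on_def)
  also have "\<dots> = (\<Prod>j\<in>S'. 1 - x)"
    using assms by (intro prod.cong) (auto simp: cell_pmf_def)
  finally show ?thesis
    by simp
qed

lemma prob_clean_cell:
  assumes "i < n" "j < p" "j \<notin> S'" "S' \<subseteq> {..<p}" "0 \<le> x" "x \<le> 1"
  shows "measure_pmf.prob (Pi_pmf (test_cells n p) False (cell_pmf p x \<rho>)) {W. W (i, j) \<and> avoids S' W i} =
    x * (1 - x) ^ card S'"
proof -
  have "{W. W (i, j) \<and> avoids S' W i} = {W. (\<forall>c\<in>{(i, j)}. W c) \<and> (\<forall>c\<in>{i} \<times> S'. \<not> W c)}"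
    by (auto simp: avoids_def)
  also have "measure_pmf.prob (Pi_pmf (test_cells n p) False (cell_pmf p x \<rho>)) \<dots> =
      (\<Prod>c\<in>{(i, j)}. pmf (cell_pmf p x \<rho> c) True) * (\<Prod>c\<in>{i} \<times> S'. pmf (cell_pmf p x \<rho> c) False)"
    using assms by (intro measure_Pi_pmf_cylinder) (auto simp: test_cells_def)
  finally show ?thesis
    using assms by (simp add: prod_cell_pmf_False_row pmf_cell_pmf_item)
qed

lemma prob_clean_cell_noise:
  assumes "i < n" "j < p" "j \<notin> S'" "S' \<subseteq> {..<p}" "0 \<le> x" "x \<le> 1" "0 \<le> \<rho>" "\<rho> \<le> 1"
  shows "measure_pmf.prob (Pi_pmf (test_cells n p) False (cell_pmf p x \<rho>))
      {W. W (i, j) \<and> avoids S' W i \<and> W (i, p) = z} = x * (1 - x) ^ card S' * (if z then \<rho> else 1 - \<rho>)"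
proof -
  let ?M = "Pi_pmf (test_cells n p) False (cell_pmf p x \<rho>)"
  have p: "(i, p) \<notin> {i} \<times> S'"
    using assms(4) by auto
  show ?thesis
  proof (cases z)
    case True
    have "{W. W (i, j) \<and> avoids S' W i \<and> W (i, p) = z} =
        {W. (\<forall>c\<in>{(i, j), (i, p)}. W c) \<and> (\<forall>c\<in>{i} \<times> S'. \<not> W c)}"
      using True by (auto simp: avoids_def)
    also have "measure_pmf.prob ?M \<dots> =
        (\<Prod>c\<in>{(i, j), (i, p)}. pmf (cell_pmf p x \<rho> c) True) * (\<Prod>c\<in>{i} \<times> S'. pmf (cell_pmf p x \<rho> c) False)"
      using assms p by (intro measure_Pi_pmf_cylinder) (auto simp: test_cells_def)
    finally show ?thesis
      using assms True by (simp add: prod_cell_pmf_False_row pmf_cell_pmf_item pmf_cell_pmf_noise)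
  next
    case False
    have "{W. W (i, j) \<and> avoids S' W i \<and> W (i, p) = z} =
        {W. (\<forall>c\<in>{(i, j)}. W c) \<and> (\<forall>c\<in>insert (i, p) ({i} \<times> S'). \<not> W c)}"
      using False by (auto simp: avoids_def)
    also have "measure_pmf.prob ?M \<dots> =
        (\<Prod>c\<in>{(i, j)}. pmf (cell_pmf p x \<rho> c) True) *
        (\<Prod>c\<in>insert (i, p) ({i} \<times> S'). pmf (cell_pmf p x \<rho> c) False)"
      using assms p by (intro measure_Pi_pmf_cylinder) (auto simp: test_cells_def)
    finally show ?thesis
      using assms False p finite_subset[OF assms(4)]
      by (simp add: prod_cell_pmf_False_row pmf_cell_pmf_item pmf_cell_pmf_noise)
  qed
qed

lemma prob_false_accept_le:
  assumes S: "S \<subseteq> {..<p}" "card S = k" and j: "j < p" "j \<notin> S"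
    and x: "0 \<le> x" "x \<le> 1" and \<rho>: "0 \<le> \<rho>" "\<rho> \<le> 1" and s: "1 \<le> s"
  shows "measure_pmf.prob (Pi_pmf (test_cells n p) False (cell_pmf p x \<rho>)) {W. false_accept n p S T W j}
     \<le> (1 - x * (1 - x) ^ k + x * (1 - x) ^ k * \<rho> * s) ^ n / s powr T"
proof -
  let ?M = "Pi_pmf (test_cells n p) False (cell_pmf p x \<rho>)"
  define g :: "nat \<Rightarrow> (nat \<times> nat \<Rightarrow> bool) \<Rightarrow> real" where "g i W = 1 + (s - 1) * of_bool (W (i, j) \<and> avoids S W i \<and> W (i, p))
     + (- 1) * of_bool (W (i, j) \<and> avoids S W i \<and> \<not> W (i, p))" for i W
  have g: "g i W = (if W (i, j) \<and> avoids S W i then if W (i, p) then s else 0 else 1)" for i W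
    by (simp add: g_def)
  have row: "measure_pmf.expectation ?M (g i) = 1 - x * (1 - x) ^ k + x * (1 - x) ^ k * \<rho> * s"
    if "i < n" for i
  proof -
    have "measure_pmf.expectation ?M (g i) =
        1 + (s - 1) * measure_pmf.prob ?M {W. W (i, j) \<and> avoids S W i \<and> W (i, p)}
          + (- 1) * measure_pmf.prob ?M {W. W (i, j) \<and> avoids S W i \<and> \<not> W (i, p)}"
      unfolding g_def by (rule expectation_affine_indicator2[OF finite_set_pmf_test_cells])
    also have "measure_pmf.prob ?M {W. W (i, j) \<and> avoids S W i \<and> W (i, p)} = x * (1 - x) ^ k * \<rho>"
      using prob_clean_cell_noise[of i n j p S x \<rho> True] that S j x \<rho> by simp
    also have "measure_pmf.prob ?M {W. W (i, j) \<and> avoids S W i \<and> \<not> W (i, p)} = x * (1 - x) ^ k * (1 - \<rho>)"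
      using prob_clean_cell_noise[of i n j p S x \<rho> False] that S j x \<rho> by simp
    finally show ?thesis
      by (simp add: algebra_simps)
  qed
  have "measure_pmf.prob ?M {W. false_accept n p S T W j} \<le>
      (\<Prod>i<n. measure_pmf.expectation ?M (g i)) / s powr T"
  proof (rule prob_le_prod_row_expectations)
    fix i :: nat and W W' :: "nat \<times> nat \<Rightarrow> bool"
    assume "i < n" and row: "\<And>j. j \<le> p \<Longrightarrow> W (i, j) = W' (i, j)"
    then show "g i W = g i W'"
      using avoids_cong_row[OF S(1), of W i W', OF row] row[of j] row[of p] j by (simp add: g_def)
  next
    fix W assume "W \<in> {W. false_accept n p S T W j}"
    then have T: "T \<le> real (card (clean_tests n S W j))"
      and noisy: "\<And>i. i \<in> clean_tests n S W j \<Longrightarrow> W (i, p)"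
      by (auto simp: false_accept_def survives_def)
    have "(\<Prod>i<n. g i W) = (\<Prod>i<n. if i \<in> clean_tests n S W j then s else 1)"
      using noisy by (intro prod.cong) (auto simp: g clean_tests_def)
    also have "\<dots> = s powr real (card (clean_tests n S W j))"
      using s by (simp add: prod_if_eq_power powr_realpow clean_tests_def)
    finally show "s powr T \<le> (\<Prod>i<n. g i W)"
      using s T by (simp add: powr_mono)
  qed (use s in \<open>auto simp: g\<close>)
  also have "(\<Prod>i<n. measure_pmf.expectation ?M (g i)) =
      (\<Prod>i<n. 1 - x * (1 - x) ^ k + x * (1 - x) ^ k * \<rho> * s)"
    by (intro prod.cong refl row) simp
  finally show ?thesis
    by simp
qed

lemma prob_few_clean_tests_le:
  assumes S: "S \<subseteq> {..<p}" "card S = k" and j: "j \<in> S"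
    and x: "0 \<le> x" "x \<le> 1" and s: "0 < s" "s \<le> 1"
  shows "measure_pmf.prob (Pi_pmf (test_cells n p) False (cell_pmf p x \<rho>))
      {W. real (card (clean_tests n (S - {j}) W j)) < a}
     \<le> (1 - x * (1 - x) ^ (k - 1) + x * (1 - x) ^ (k - 1) * s) ^ n / s powr a"
proof -
  let ?M = "Pi_pmf (test_cells n p) False (cell_pmf p x \<rho>)"
  have jp: "j < p" and S': "S - {j} \<subseteq> {..<p}" "card (S - {j}) = k - 1"
    using S j finite_subset[OF S(1)] by auto
  define g :: "nat \<Rightarrow> (nat \<times> nat \<Rightarrow> bool) \<Rightarrow> real" where "g i W = 1 + (s - 1) * of_bool (W (i, j) \<and> avoids (S - {j}) W i)" for i W
  have g: "g i W = (if W (i, j) \<and> avoids (S - {j}) W i then s else 1)" for i W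
    by (simp add: g_def)
  have row: "measure_pmf.expectation ?M (g i) = 1 - x * (1 - x) ^ (k - 1) + x * (1 - x) ^ (k - 1) * s"
    if "i < n" for i
  proof -
    have "measure_pmf.expectation ?M (g i) =
        1 + (s - 1) * measure_pmf.prob ?M {W. W (i, j) \<and> avoids (S - {j}) W i}"
      unfolding g_def by (rule expectation_affine_indicator[OF finite_set_pmf_test_cells])
    also have "measure_pmf.prob ?M {W. W (i, j) \<and> avoids (S - {j}) W i} = x * (1 - x) ^ (k - 1)"
      using prob_clean_cell[of i n j p "S - {j}" x \<rho>] that S' jp x by simp
    finally show ?thesis
      by (simp add: algebra_simps)
  qed
  have "measure_pmf.prob ?M {W. real (card (clean_tests n (S - {j}) W j)) < a} \<le>
      (\<Prod>i<n. measure_pmf.expectation ?M (g i)) / s powr a"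
  proof (rule prob_le_prod_row_expectations)
    fix i :: nat and W W' :: "nat \<times> nat \<Rightarrow> bool"
    assume "i < n" and row: "\<And>j. j \<le> p \<Longrightarrow> W (i, j) = W' (i, j)"
    then show "g i W = g i W'"
      using avoids_cong_row[OF S'(1), of W i W', OF row] row[of j] jp by (simp add: g_def)
  next
    fix W assume "W \<in> {W. real (card (clean_tests n (S - {j}) W j)) < a}"
    then have few: "real (card (clean_tests n (S - {j}) W j)) < a"
      by simp
    have "(\<Prod>i<n. g i W) = s powr real (card (clean_tests n (S - {j}) W j))"
      using s by (simp add: g prod_if_eq_power powr_realpow clean_tests_def)
    then show "s powr a \<le> (\<Prod>i<n. g i W)"
      using s few by (simp add: powr_mono')
  qed (use s in \<open>auto simp: g\<close>)
  also have "(\<Prod>i<n. measure_pmf.expectation ?M (g i)) =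
      (\<Prod>i<n. 1 - x * (1 - x) ^ (k - 1) + x * (1 - x) ^ (k - 1) * s)"
    by (intro prod.cong refl row) simp
  finally show ?thesis
    by simp
qed

lemma expectation_survives:
  assumes S: "S \<subseteq> {..<p}" "card S = k" and j: "j < p" "j \<notin> S"
    and x: "0 \<le> x" "x \<le> 1" and \<rho>: "0 \<le> \<rho>" "\<rho> \<le> 1"
  shows "measure_pmf.expectation (Pi_pmf (test_cells n p) False (cell_pmf p x \<rho>))
      (\<lambda>W. of_bool (survives n p S W j)) = (1 - x * (1 - x) ^ k * (1 - \<rho>)) ^ n"
proof -
  let ?M = "Pi_pmf (test_cells n p) False (cell_pmf p x \<rho>)"
  define g :: "nat \<Rightarrow> (nat \<times> nat \<Rightarrow> bool) \<Rightarrow> real" where "g i W = 1 + (- 1) * of_bool (W (i, j) \<and> avoids S W i \<and> \<not> W (i, p))" for i W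
  have "of_bool (survives n p S W j) = (\<Prod>i<n. g i W)" for W
  proof (cases "survives n p S W j")
    case True
    then have "g i W = 1" if "i < n" for i
      using that by (auto simp: g_def survives_def clean_tests_def)
    then show ?thesis
      using True by (simp add: prod.neutral)
  next
    case False
    then obtain i where "i < n" "W (i, j) \<and> avoids S W i \<and> \<not> W (i, p)"
      by (auto simp: survives_def clean_tests_def)
    then show ?thesis
      using False by (auto simp: g_def intro!: prod_zero[symmetric] bexI[of _ i])
  qed
  then have "measure_pmf.expectation ?M (\<lambda>W. of_bool (survives n p S W j)) =
      measure_pmf.expectation ?M (\<lambda>W. \<Prod>i<n. g i W)"
    by simp
  also have "\<dots> = (\<Prod>i<n. measure_pmf.expectation ?M (g i))"
  proof (rule expectation_prod_rows)
    fix i :: nat and W W' :: "nat \<times> nat \<Rightarrow> bool"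
    assume "i < n" and row: "\<And>j. j \<le> p \<Longrightarrow> W (i, j) = W' (i, j)"
    then show "g i W = g i W'"
      using avoids_cong_row[OF S(1), of W i W', OF row] row[of j] row[of p] j by (simp add: g_def)
  qed
  also have "\<dots> = (\<Prod>i<n. 1 - x * (1 - x) ^ k * (1 - \<rho>))"
  proof (intro prod.cong refl)
    fix i assume "i \<in> {..<n}"
    then have "measure_pmf.prob ?M {W. W (i, j) \<and> avoids S W i \<and> \<not> W (i, p)} = x * (1 - x) ^ k * (1 - \<rho>)"
      using prob_clean_cell_noise[of i n j p S x \<rho> False] S j x \<rho> by simp
    moreover have "measure_pmf.expectation ?M (g i) =
        1 + (- 1) * measure_pmf.prob ?M {W. W (i, j) \<and> avoids S W i \<and> \<not> W (i, p)}"
      unfolding g_def by (rule expectation_affine_indicator[OF finite_set_pmf_test_cells])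
    ultimately show "measure_pmf.expectation ?M (g i) = 1 - x * (1 - x) ^ k * (1 - \<rho>)"
      by simp
  qed
  finally show ?thesis
    by simp
qed

lemma prob_many_spurious_le:
  assumes S: "S \<subseteq> {..<p}" "card S = k"
    and x: "0 \<le> x" "x \<le> 1" and \<rho>: "0 \<le> \<rho>" "\<rho> \<le> 1" and M: "0 < M"
  shows "measure_pmf.prob (Pi_pmf (test_cells n p) False (cell_pmf p x \<rho>)) {W. M < real (card (spurious n p S W))}
     \<le> real p * (1 - x * (1 - x) ^ k * (1 - \<rho>)) ^ n / M"
proof -
  let ?M = "Pi_pmf (test_cells n p) False (cell_pmf p x \<rho>)"
  let ?b = "(1 - x * (1 - x) ^ k * (1 - \<rho>)) ^ n"
  have card: "real (card (spurious n p S W)) = (\<Sum>j\<in>{..<p} - S. of_bool (survives n p S W j))" for W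
  proof -
    have "spurious n p S W = {j \<in> {..<p} - S. survives n p S W j}"
      by (auto simp: spurious_def)
    then show ?thesis
      by (simp add: sum.If_cases Int_def)
  qed
  have "measure_pmf.prob ?M {W. M < real (card (spurious n p S W))} \<le>
      measure_pmf.expectation ?M (\<lambda>W. real (card (spurious n p S W)) / M)"
    using M by (intro prob_le_expectation finite_set_pmf_test_cells) auto
  also have "\<dots> = measure_pmf.expectation ?M (\<lambda>W. real (card (spurious n p S W))) / M"
    by simp
  also have "measure_pmf.expectation ?M (\<lambda>W. real (card (spurious n p S W))) =
      (\<Sum>j\<in>{..<p} - S. measure_pmf.expectation ?M (\<lambda>W. of_bool (survives n p S W j)))"
    unfolding card by (intro Bochner_Integration.integral_sum integrable_measure_pmf_finite
        finite_set_pmf_test_cells)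
  also have "\<dots> = real (card ({..<p} - S)) * ?b"
    using S x \<rho> by (simp add: expectation_survives)
  finally have "measure_pmf.prob ?M {W. M < real (card (spurious n p S W))} \<le> real (card ({..<p} - S)) * ?b / M" .
  moreover have "real (card ({..<p} - S)) * ?b \<le> real p * ?b"
  proof (rule mult_right_mono)
    show "real (card ({..<p} - S)) \<le> real p"
      by (metis card_Diff_subset card_lessThan diff_le_self S(1) finite_subset finite_lessThan of_nat_le_iff)
    have "x * (1 - x) ^ k * (1 - \<rho>) \<le> 1"
      using x \<rho> by (intro mult_le_one power_le_one) auto
    then show "0 \<le> ?b"
      by simp
  qed
  ultimately show ?thesis
    using M by (meson divide_right_mono less_imp_le order_trans)
qed

lemma spurious_cong:
  assumes S: "S \<subseteq> {..<p}"
    and avoids: "\<And>i. i < n \<Longrightarrow> avoids S W i \<longleftrightarrow> avoids S W' i"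
    and clean_rows: "\<And>i j. i < n \<Longrightarrow> j \<le> p \<Longrightarrow> j \<notin> S \<Longrightarrow> avoids S W i \<Longrightarrow> W (i, j) = W' (i, j)"
  shows "spurious n p S W = spurious n p S W'"
proof -
  have "p \<notin> S"
    using S by auto
  have "survives n p S W j \<longleftrightarrow> survives n p S W' j" if "j < p" "j \<notin> S" for j
  proof -
    have "(W (i, j) \<and> avoids S W i \<longrightarrow> W (i, p)) \<longleftrightarrow> (W' (i, j) \<and> avoids S W' i \<longrightarrow> W' (i, p))"
      if "i < n" for i
      using avoids[OF that] clean_rows[OF that, of j] clean_rows[OF that, of p] \<open>p \<notin> S\<close> \<open>j < p\<close> \<open>j \<notin> S\<close>
      by auto
    then show ?thesis
      by (auto simp: survives_def clean_tests_def)
  qed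
  then show ?thesis
    by (auto simp: spurious_def)
qed

lemma expectation_interference_le:
  assumes R: "finite R" "T \<subseteq> R" and w: "w \<subseteq> {..<p} - S" "real (card w) \<le> M"
    and x: "0 \<le> x" "x \<le> 1" and s: "1 \<le> s"
  shows "measure_pmf.expectation (Pi_pmf (R \<times> ({..<p} - S)) False (cell_pmf p x \<rho>))
      (\<lambda>h. s ^ card {i \<in> T. \<exists>j\<in>w. h (i, j)}) \<le> (1 + (s - 1) * M * x) ^ card T"
proof -
  let ?N = "Pi_pmf (R \<times> ({..<p} - S)) False (cell_pmf p x \<rho>)"
  let ?E = "measure_pmf.expectation ?N"
  have finN: "finite (set_pmf ?N)"
    using R(1) by (intro finite_set_Pi_pmf_bool) simp
  have finT: "finite T"
    using R finite_subset by auto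
  have finw: "finite w"
    using w(1) by (rule finite_subset) simp
  have "?E (\<lambda>h. s ^ card {i \<in> T. \<exists>j\<in>w. h (i, j)}) = ?E (\<lambda>h. \<Prod>i\<in>T. if \<exists>j\<in>w. h (i, j) then s else 1)"
    using finT by (simp add: prod_if_eq_power)
  also have "\<dots> = (\<Prod>i\<in>T. ?E (\<lambda>h. if \<exists>j\<in>w. h (i, j) then s else 1))"
  proof (rule expectation_Pi_pmf_prod_blocks[where Bl = "\<lambda>i. {i} \<times> ({..<p} - S)"])
    fix i :: nat and f f' :: "nat \<times> nat \<Rightarrow> bool"
    assume "i \<in> T" and "\<And>c. c \<in> {i} \<times> ({..<p} - S) \<Longrightarrow> f c = f' c"
    then have "\<forall>j\<in>w. f (i, j) = f' (i, j)"
      using w(1) by auto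
    then show "(if \<exists>j\<in>w. f (i, j) then s else 1) = (if \<exists>j\<in>w. f' (i, j) then s else 1)"
      by auto
  qed (use finT R in \<open>auto simp: disjoint_family_on_def\<close>)
  also have "\<dots> \<le> (\<Prod>i\<in>T. 1 + (s - 1) * M * x)"
  proof (intro prod_mono conjI)
    fix i assume i: "i \<in> T"
    have "measure_pmf.prob ?N {h. h (i, j)} = x" if "j \<in> w" for j
    proof -
      have "measure_pmf.prob ?N {h. h (i, j)} = measure_pmf.prob ?N {h. (\<forall>c\<in>{(i, j)}. h c) \<and> (\<forall>c\<in>{}. \<not> h c)}"
        by simp
      also have "\<dots> = pmf (cell_pmf p x \<rho> (i, j)) True"
        using i that R w(1) by (subst measure_Pi_pmf_cylinder) auto
      finally show ?thesis
        using that w(1) x by (auto simp: pmf_cell_pmf_item)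
    qed
    then have "measure_pmf.prob ?N {h. \<exists>j\<in>w. h (i, j)} \<le> real (card w) * x"
      using prob_Bex_le_sum[OF finw, of ?N "\<lambda>j h. h (i, j)"] by simp
    also have "\<dots> \<le> M * x"
      using w(2) x by (intro mult_right_mono) auto
    finally have "(s - 1) * measure_pmf.prob ?N {h. \<exists>j\<in>w. h (i, j)} \<le> (s - 1) * (M * x)"
      using s by (intro mult_left_mono) auto
    moreover have "?E (\<lambda>h. if \<exists>j\<in>w. h (i, j) then s else 1) =
        ?E (\<lambda>h. 1 + (s - 1) * of_bool (\<exists>j\<in>w. h (i, j)))"
      by (intro Bochner_Integration.integral_cong) auto
    moreover have "\<dots> = 1 + (s - 1) * measure_pmf.prob ?N {h. \<exists>j\<in>w. h (i, j)}"
      by (rule expectation_affine_indicator[OF finN])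
    ultimately show "?E (\<lambda>h. if \<exists>j\<in>w. h (i, j) then s else 1) \<le> 1 + (s - 1) * M * x"
      by (simp add: mult.assoc)
    show "0 \<le> ?E (\<lambda>h. if \<exists>j\<in>w. h (i, j) then s else 1)"
      using s by (intro Bochner_Integration.integral_nonneg) auto
  qed
  finally show ?thesis
    by simp
qed

definition interference_weight ::
    "nat \<Rightarrow> nat \<Rightarrow> nat set \<Rightarrow> real \<Rightarrow> real \<Rightarrow> nat \<Rightarrow> (nat \<times> nat \<Rightarrow> bool) \<Rightarrow> real" where
  "interference_weight n p S M s j W =
     (if real (card (spurious n p S W)) \<le> M then s ^ card (interfered_tests n p S W j) else 0)"

text \<open>Given the defective columns \<open>d\<close>, the spurious set only depends on rows without defectives,
  whereas interference in a test containing \<open>j\<close> is decided by the cells of that (defective) row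
  in non-defective columns: the two are independent.\<close>

lemma expectation_interference_weight_given_defectives_le:
  assumes S: "S \<subseteq> {..<p}" and j: "j \<in> S" and x: "0 \<le> x" "x \<le> 1" and s: "1 \<le> s" and M: "0 \<le> M"
  shows "measure_pmf.expectation (Pi_pmf (test_cells n p - {..<n} \<times> S) False (cell_pmf p x \<rho>))
      (\<lambda>h. interference_weight n p S M s j (\<lambda>c. if c \<in> {..<n} \<times> S then d c else h c))
    \<le> (1 + (s - 1) * M * x) ^ card {i. i < n \<and> d (i, j)}"
proof -
  let ?Q = "cell_pmf p x \<rho>"
  define D where "D = {..<n} \<times> S"
  define R1 where "R1 = {i. i < n \<and> \<not> avoids S d i} \<times> ({..<p} - S)"
  define R2 where "R2 = test_cells n p - D - R1"
  define W where "W g h = (\<lambda>c. if c \<in> D then d c else if c \<in> R2 then g c else h c)" for g h :: "nat \<times> nat \<Rightarrow> bool"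
  define w where "w g = spurious n p S (W g (\<lambda>_. False))" for g
  define c0 where "c0 = 1 + (s - 1) * M * x"
  let ?T = "{i. i < n \<and> d (i, j)}"
  have split: "test_cells n p - D = R2 \<union> R1" and disj: "R2 \<inter> R1 = {}"
    using S by (auto simp: R1_def R2_def D_def test_cells_def avoids_def)
  have fin: "finite R1" "finite R2"
    by (auto simp: R1_def R2_def test_cells_def)
  have avoids_W: "avoids S (W g h) i \<longleftrightarrow> avoids S d i" if "i < n" for g h i
    using that by (auto simp: avoids_def W_def D_def)
  have spurious_W: "spurious n p S (W g h) = w g" for g h
    unfolding w_def
  proof (rule spurious_cong[OF S])
    fix i j' assume "i < n" "j' \<le> p" "j' \<notin> S" "avoids S (W g h) i"
    then show "W g h (i, j') = W g (\<lambda>_. False) (i, j')"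
      using avoids_W by (auto simp: W_def R1_def R2_def D_def test_cells_def)
  qed (simp add: avoids_W)
  have interfered_W: "interfered_tests n p S (W g h) j =
      {i \<in> ?T. \<exists>j'\<in>w g. h (i, j')}" for g h
  proof -
    have "W g h (i, j') = h (i, j')" if "i < n" "d (i, j)" "j' < p" "j' \<notin> S" for i j'
      using that j by (auto simp: W_def R1_def R2_def D_def avoids_def)
    moreover have "W g h (i, j) = d (i, j)" if "i < n" for i
      using that j by (simp add: W_def D_def)
    ultimately show ?thesis
      unfolding interfered_tests_def spurious_W by (auto simp: w_def spurious_def)
  qed
  have inner: "measure_pmf.expectation (Pi_pmf R1 False ?Q) (\<lambda>h. interference_weight n p S M s j (W g h))
      \<le> c0 ^ card ?T" for g
  proof (cases "real (card (w g)) \<le> M")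
    case True
    have "measure_pmf.expectation (Pi_pmf R1 False ?Q) (\<lambda>h. interference_weight n p S M s j (W g h)) =
        measure_pmf.expectation (Pi_pmf R1 False ?Q)
          (\<lambda>h. s ^ card {i \<in> ?T. \<exists>j'\<in>w g. h (i, j')})"
      using True by (simp add: interference_weight_def spurious_W interfered_W)
    also have "\<dots> \<le> c0 ^ card ?T"
      unfolding c0_def R1_def using True x s j
      by (intro expectation_interference_le) (auto simp: w_def spurious_def avoids_def)
    finally show ?thesis .
  next
    case False
    then show ?thesis
      using s M x by (simp add: interference_weight_def spurious_W c0_def)
  qed
  have "measure_pmf.expectation (Pi_pmf (R2 \<union> R1) False ?Q)
      (\<lambda>h. interference_weight n p S M s j (\<lambda>c. if c \<in> D then d c else h c))
    \<le> measure_pmf.expectation (Pi_pmf R2 False ?Q) (\<lambda>_. c0 ^ card ?T)"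
    using inner by (intro expectation_Pi_pmf_union_le fin disj) (simp add: W_def)
  then show ?thesis
    by (simp add: split[symmetric] D_def c0_def)
qed

lemma expectation_pow_card_column:
  assumes S: "S \<subseteq> {..<p}" and j: "j \<in> S" and x: "0 \<le> x" "x \<le> 1"
  shows "measure_pmf.expectation (Pi_pmf ({..<n} \<times> S) False (cell_pmf p x \<rho>))
      (\<lambda>d. c ^ card {i. i < n \<and> d (i, j)}) = (1 - x + x * c) ^ n"
proof -
  let ?N = "Pi_pmf ({..<n} \<times> S) False (cell_pmf p x \<rho>)"
  have fin: "finite ({..<n} \<times> S)"
    using S finite_subset by auto
  have "measure_pmf.expectation ?N (\<lambda>d. c ^ card {i. i < n \<and> d (i, j)}) =
      measure_pmf.expectation ?N (\<lambda>d. \<Prod>i<n. if d (i, j) then c else 1)"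
    by (simp add: prod_if_eq_power)
  also have "\<dots> = (\<Prod>i<n. measure_pmf.expectation ?N (\<lambda>d. if d (i, j) then c else 1))"
    by (rule expectation_Pi_pmf_prod_blocks[where Bl = "\<lambda>i. {(i, j)}"])
       (use fin j in \<open>auto simp: disjoint_family_on_def\<close>)
  also have "\<dots> = (\<Prod>i<n. 1 - x + x * c)"
  proof (intro prod.cong refl)
    fix i assume i: "i \<in> {..<n}"
    have "measure_pmf.prob ?N {d. d (i, j)} = measure_pmf.prob ?N {d. (\<forall>c\<in>{(i, j)}. d c) \<and> (\<forall>c\<in>{}. \<not> d c)}"
      by simp
    also have "\<dots> = x"
      using i j S x fin by (subst measure_Pi_pmf_cylinder) (auto simp: pmf_cell_pmf_item)
    finally have "measure_pmf.prob ?N {d. d (i, j)} = x" .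
    moreover have "measure_pmf.expectation ?N (\<lambda>d. if d (i, j) then c else 1) =
        measure_pmf.expectation ?N (\<lambda>d. 1 + (c - 1) * of_bool (d (i, j)))"
      by (intro Bochner_Integration.integral_cong) auto
    moreover have "\<dots> = 1 + (c - 1) * measure_pmf.prob ?N {d. d (i, j)}"
      by (rule expectation_affine_indicator[OF finite_set_Pi_pmf_bool[OF fin]])
    ultimately show "measure_pmf.expectation ?N (\<lambda>d. if d (i, j) then c else 1) = 1 - x + x * c"
      by (simp add: algebra_simps)
  qed
  finally show ?thesis
    by simp
qed

lemma prob_interference_le:
  assumes S: "S \<subseteq> {..<p}" and j: "j \<in> S" and x: "0 \<le> x" "x \<le> 1" and s: "1 \<le> s" and M: "0 \<le> M"
  shows "measure_pmf.prob (Pi_pmf (test_cells n p) False (cell_pmf p x \<rho>))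
      {W. b < real (card (interfered_tests n p S W j)) \<and> real (card (spurious n p S W)) \<le> M}
    \<le> (1 - x + x * (1 + (s - 1) * M * x)) ^ n / s powr b"
proof -
  let ?Q = "cell_pmf p x \<rho>"
  let ?M = "Pi_pmf (test_cells n p) False ?Q"
  define D where "D = {..<n} \<times> S"
  have finD: "finite D"
    using S finite_subset by (auto simp: D_def)
  have cells: "test_cells n p = D \<union> (test_cells n p - D)"
    using S by (auto simp: D_def test_cells_def)
  have "measure_pmf.prob ?M {W. b < real (card (interfered_tests n p S W j)) \<and> real (card (spurious n p S W)) \<le> M}
      \<le> measure_pmf.expectation ?M (\<lambda>W. interference_weight n p S M s j W / s powr b)"
  proof (rule prob_le_expectation[OF finite_set_pmf_test_cells])
    show "0 \<le> interference_weight n p S M s j W / s powr b" for W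
      using s by (simp add: interference_weight_def)
    fix W assume "W \<in> {W. b < real (card (interfered_tests n p S W j)) \<and> real (card (spurious n p S W)) \<le> M}"
    then show "1 \<le> interference_weight n p S M s j W / s powr b"
      using s by (auto simp: interference_weight_def powr_realpow[symmetric] intro: powr_mono)
  qed
  also have "\<dots> = measure_pmf.expectation ?M (interference_weight n p S M s j) / s powr b"
    by simp
  also have "measure_pmf.expectation ?M (interference_weight n p S M s j) \<le>
      measure_pmf.expectation (Pi_pmf D False ?Q) (\<lambda>d. (1 + (s - 1) * M * x) ^ card {i. i < n \<and> d (i, j)})"
  proof (subst cells, rule expectation_Pi_pmf_union_le[OF finD])
    show "measure_pmf.expectation (Pi_pmf (test_cells n p - D) False ?Q)
        (\<lambda>h. interference_weight n p S M s j (\<lambda>c. if c \<in> D then d c else h c))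
      \<le> (1 + (s - 1) * M * x) ^ card {i. i < n \<and> d (i, j)}" for d
      unfolding D_def by (rule expectation_interference_weight_given_defectives_le[OF S j x s M])
  qed (auto simp: test_cells_def)
  also have "\<dots> = (1 - x + x * (1 + (s - 1) * M * x)) ^ n"
    unfolding D_def by (rule expectation_pow_card_column[OF S j x])
  finally show ?thesis
    using s by (simp add: divide_right_mono)
qed

lemma prob_some_false_accept_le:
  assumes S: "S \<subseteq> {..<p}" "card S = k"
    and x: "0 \<le> x" "x \<le> 1" and \<rho>: "0 \<le> \<rho>" "\<rho> \<le> 1" and s: "1 \<le> s"
  shows "measure_pmf.prob (Pi_pmf (test_cells n p) False (cell_pmf p x \<rho>))
      {W. \<exists>j\<in>{..<p} - S. false_accept n p S T W j}
    \<le> real p * ((1 - x * (1 - x) ^ k + x * (1 - x) ^ k * \<rho> * s) ^ n / s powr T)"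
    (is "?P \<le> real p * ?A")
proof -
  have "?P \<le> (\<Sum>j\<in>{..<p} - S. ?A)"
    using S x \<rho> s by (intro order.trans[OF prob_Bex_le_sum] sum_mono prob_false_accept_le) auto
  also have "\<dots> \<le> real p * ?A"
  proof -
    have "x * (1 - x) ^ k \<le> 1" "0 \<le> x * (1 - x) ^ k * \<rho> * s"
      using x \<rho> s by (auto intro!: mult_le_one power_le_one)
    then have "0 \<le> ?A"
      by simp
    moreover have "card ({..<p} - S) \<le> p"
      by (metis card_Diff_subset card_lessThan diff_le_self S(1) finite_subset finite_lessThan)
    ultimately have "real (card ({..<p} - S)) * ?A \<le> real p * ?A"
      by (intro mult_right_mono) auto
    then show ?thesis
      by simp
  qed
  finally show ?thesis .
qed

lemma prob_some_few_clean_tests_le: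
  assumes S: "S \<subseteq> {..<p}" "card S = k" and x: "0 \<le> x" "x \<le> 1" and s: "0 < s" "s \<le> 1"
  shows "measure_pmf.prob (Pi_pmf (test_cells n p) False (cell_pmf p x \<rho>))
      {W. \<exists>j\<in>S. real (card (clean_tests n (S - {j}) W j)) < a}
    \<le> real k * ((1 - x * (1 - x) ^ (k - 1) + x * (1 - x) ^ (k - 1) * s) ^ n / s powr a)"
proof -
  have "finite S"
    using S(1) finite_subset by blast
  then have "measure_pmf.prob (Pi_pmf (test_cells n p) False (cell_pmf p x \<rho>))
      {W. \<exists>j\<in>S. real (card (clean_tests n (S - {j}) W j)) < a}
    \<le> (\<Sum>j\<in>S. (1 - x * (1 - x) ^ (k - 1) + x * (1 - x) ^ (k - 1) * s) ^ n / s powr a)"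
    using S x s by (intro order.trans[OF prob_Bex_le_sum] sum_mono prob_few_clean_tests_le) auto
  then show ?thesis
    using S(2) by simp
qed

lemma prob_some_interference_le:
  assumes S: "S \<subseteq> {..<p}" "card S = k" and x: "0 \<le> x" "x \<le> 1" and s: "1 \<le> s" and M: "0 \<le> M"
  shows "measure_pmf.prob (Pi_pmf (test_cells n p) False (cell_pmf p x \<rho>))
      {W. \<exists>j\<in>S. b < real (card (interfered_tests n p S W j)) \<and> real (card (spurious n p S W)) \<le> M}
    \<le> real k * ((1 - x + x * (1 + (s - 1) * M * x)) ^ n / s powr b)"
proof -
  have "finite S"
    using S(1) finite_subset by blast
  then have "measure_pmf.prob (Pi_pmf (test_cells n p) False (cell_pmf p x \<rho>))
      {W. \<exists>j\<in>S. b < real (card (interfered_tests n p S W j)) \<and> real (card (spurious n p S W)) \<le> M}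
    \<le> (\<Sum>j\<in>S. (1 - x + x * (1 + (s - 1) * M * x)) ^ n / s powr b)"
    using S x s M by (intro order.trans[OF prob_Bex_le_sum] sum_mono prob_interference_le) auto
  then show ?thesis
    using S(2) by simp
qed

lemma dd_error_prob_le:
  fixes \<nu> \<rho> \<beta> sA sC sI a b M :: real
  assumes k: "1 \<le> k" "k \<le> p" and x: "0 \<le> \<nu> / real k" "\<nu> / real k \<le> 1" and \<rho>: "0 \<le> \<rho>" "\<rho> \<le> 1"
    and sA: "1 \<le> sA" and sC: "0 < sC" "sC \<le> 1" and sI: "1 \<le> sI" and M: "0 < M"
    and threshold: "\<beta> * real n * \<nu> * exp (- \<nu>) / real k \<le> a - b"
  shows "dd_error_prob p k n \<nu> \<rho> \<beta> \<le>
     real p * ((1 - (\<nu> / real k) * (1 - \<nu> / real k) ^ k + (\<nu> / real k) * (1 - \<nu> / real k) ^ k * \<rho> * sA) ^ n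
        / sA powr (\<beta> * real n * \<nu> * exp (- \<nu>) / real k))
   + real k * ((1 - (\<nu> / real k) * (1 - \<nu> / real k) ^ (k - 1) + (\<nu> / real k) * (1 - \<nu> / real k) ^ (k - 1) * sC) ^ n
        / sC powr a)
   + real p * (1 - (\<nu> / real k) * (1 - \<nu> / real k) ^ k * (1 - \<rho>)) ^ n / M
   + real k * ((1 - \<nu> / real k + (\<nu> / real k) * (1 + (sI - 1) * M * (\<nu> / real k))) ^ n / sI powr b)"
  (is "_ \<le> ?bound")
proof (rule dd_error_prob_le_of_conditional)
  show "ksubsets p k \<noteq> {}"
    using k by (auto simp: ksubsets_def intro!: exI[of _ "{..<k}"])
next
  fix S assume "S \<in> ksubsets p k"
  then have S: "S \<subseteq> {..<p}" "card S = k"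
    by (auto simp: ksubsets_def)
  let ?M = "Pi_pmf (test_cells n p) False (cell_pmf p (\<nu> / real k) \<rho>)"
  let ?T = "\<beta> * real n * \<nu> * exp (- \<nu>) / real k"
  let ?spurious = "\<lambda>W. real (card (spurious n p S W))"
  have "measure_pmf.prob ?M {W. dd_fails p n k \<nu> \<beta> S W} \<le> measure_pmf.prob ?M
      {W. (\<exists>j\<in>{..<p} - S. false_accept n p S ?T W j) \<or>
          (\<exists>j\<in>S. real (card (clean_tests n (S - {j}) W j)) < a) \<or>
          M < ?spurious W \<or>
          (\<exists>j\<in>S. b < real (card (interfered_tests n p S W j)) \<and> ?spurious W \<le> M)}"
    using dd_fails_cases[OF S(1) threshold] by (intro measure_pmf.finite_measure_mono) auto
  also have "\<dots> \<le> measure_pmf.prob ?M {W. \<exists>j\<in>{..<p} - S. false_accept n p S ?T W j}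
      + measure_pmf.prob ?M {W. \<exists>j\<in>S. real (card (clean_tests n (S - {j}) W j)) < a}
      + measure_pmf.prob ?M {W. M < ?spurious W}
      + measure_pmf.prob ?M {W. \<exists>j\<in>S. b < real (card (interfered_tests n p S W j)) \<and> ?spurious W \<le> M}"
    by (rule prob_disj4_le)
  also have "\<dots> \<le> ?bound"
    using S x \<rho> sA sC sI M
    by (intro add_mono prob_some_false_accept_le prob_some_few_clean_tests_le prob_many_spurious_le
        prob_some_interference_le) auto
  finally show "measure_pmf.prob ?M {W. dd_fails p n k \<nu> \<beta> S W} \<le> ?bound" .
qed

section \<open>Asymptotics\<close>

lemma pow_le_exp_mult:
  fixes t :: real
  assumes "0 \<le> 1 + t"
  shows "(1 + t) ^ n \<le> exp (real n * t)"
proof -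
  have "(1 + t) ^ n \<le> exp t ^ n"
    using assms exp_ge_add_one_self[of t] by (intro power_mono) (auto simp: add.commute)
  then show ?thesis
    by (simp add: exp_of_nat_mult)
qed

lemma mult_pow_div_powr_le_exp:
  fixes N t s u :: real
  assumes "0 < N" "0 \<le> 1 + t" "0 < s"
  shows "N * ((1 + t) ^ n / s powr u) \<le> exp (ln N + real n * t - u * ln s)"
proof -
  have "N * ((1 + t) ^ n / s powr u) \<le> exp (ln N) * (exp (real n * t) / exp (u * ln s))"
    using assms pow_le_exp_mult[OF assms(2), of n] by (simp add: powr_def divide_right_mono)
  also have "\<dots> = exp (ln N + real n * t - u * ln s)"
    by (simp add: exp_add exp_diff)
  finally show ?thesis .
qed

lemma isolation_prob_bounds:
  fixes \<nu> :: real
  assumes \<nu>: "0 \<le> \<nu>" and k: "1 \<le> k" "2 * \<nu> \<le> real k"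
  defines "q \<equiv> \<nu> / real k * (1 - \<nu> / real k) ^ k" and "r \<equiv> \<nu> / real k * (1 - \<nu> / real k) ^ (k - 1)"
  shows "\<nu> * exp (- \<nu>) / real k * exp (- 2 * \<nu>\<^sup>2 / real k) \<le> q" and "0 \<le> q" "q \<le> r" "r \<le> 1"
proof -
  define x where "x = \<nu> / real k"
  have x: "0 \<le> x" "x \<le> 1/2"
    using assms by (auto simp: x_def field_simps)
  have "real k * (- x - 2 * x\<^sup>2) \<le> real k * ln (1 - x)"
    using ln_one_minus_pos_lower_bound[OF x] by (intro mult_left_mono) auto
  also have "real k * (- x - 2 * x\<^sup>2) = - \<nu> + (- 2 * \<nu>\<^sup>2 / real k)"
    using k by (simp add: x_def power2_eq_square field_simps)
  moreover have "(1 - x) ^ k = exp (real k * ln (1 - x))"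
    using x by (subst exp_of_nat_mult) simp
  ultimately have "exp (- \<nu>) * exp (- 2 * \<nu>\<^sup>2 / real k) \<le> (1 - x) ^ k"
    by (simp add: exp_add[symmetric])
  then have "x * (exp (- \<nu>) * exp (- 2 * \<nu>\<^sup>2 / real k)) \<le> x * (1 - x) ^ k"
    using x by (intro mult_left_mono) auto
  then show "\<nu> * exp (- \<nu>) / real k * exp (- 2 * \<nu>\<^sup>2 / real k) \<le> q"
    by (simp add: q_def x_def field_simps)
  show "0 \<le> q" "q \<le> r" "r \<le> 1"
    using x unfolding q_def r_def x_def[symmetric]
    by (auto intro!: mult_le_one power_le_one mult_left_mono power_decreasing)
qed

lemma D_gamma_one_pos:
  fixes t :: real
  assumes "0 < t" "t \<noteq> 1"
  shows "0 < D_gamma 1 t"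
proof -
  have "ln (1 / t) \<noteq> 1 / t - 1"
    using assms ln_eq_minus_one[of "1 / t"] by auto
  then have "ln (1 / t) < 1 / t - 1"
    using ln_le_minus_one[of "1 / t"] assms by fastforce
  then have "t * (- ln t) < t * (1 / t - 1)"
    using assms by (intro mult_strict_left_mono) (auto simp: ln_div)
  then show ?thesis
    using assms by (simp add: D_gamma_def algebra_simps)
qed

lemma D_gamma_one_le_one:
  fixes t :: real
  assumes "0 < t" "t < 1"
  shows "D_gamma 1 t \<le> 1"
proof -
  have "ln t \<le> 1"
    using assms ln_less_self[of t] by linarith
  then show ?thesis
    using assms by (simp add: D_gamma_def)
qed

lemma exists_D_gamma_one_gt:
  fixes \<beta> \<tau> :: real
  assumes "0 < \<beta>" "\<beta> < 1" "\<tau> < 1"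
  shows "\<exists>\<beta>'. \<beta> < \<beta>' \<and> \<beta>' < 1 \<and> \<tau> * D_gamma 1 \<beta> < D_gamma 1 \<beta>'"
proof -
  have "((\<lambda>t. D_gamma 1 t) \<longlongrightarrow> D_gamma 1 \<beta>) (at_right \<beta>)"
    unfolding D_gamma_def using assms by (intro tendsto_intros) auto
  moreover have "\<tau> * D_gamma 1 \<beta> < D_gamma 1 \<beta>"
    using D_gamma_one_pos[of \<beta>] assms by simp
  ultimately have "\<forall>\<^sub>F t in at_right \<beta>. \<tau> * D_gamma 1 \<beta> < D_gamma 1 t"
    by (rule order_tendstoD(1))
  moreover have "\<forall>\<^sub>F t in at_right \<beta>. t \<in> {\<beta><..<1}"
    using assms by (intro eventually_at_right_real) auto
  ultimately have "\<forall>\<^sub>F t in at_right \<beta>. \<beta> < t \<and> t < 1 \<and> \<tau> * D_gamma 1 \<beta> < D_gamma 1 t"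
    by eventually_elim auto
  then show ?thesis
    using eventually_happens[of _ "at_right \<beta>"] trivial_limit_at_right_real[of \<beta>] by blast
qed

lemma false_accept_term_le:
  fixes q \<mu> \<gamma> :: real
  assumes \<beta>: "0 < \<rho>" "\<rho> < \<beta>" "\<beta> < 1" and q: "0 \<le> q" "q \<le> 1" and p: "1 \<le> p"
    and isolation: "\<mu> * \<gamma> \<le> real n * q" and \<mu>: "0 \<le> \<mu>"
    and \<gamma>: "0 \<le> \<gamma>" "\<gamma> \<le> 1" "1 + \<eta> / 2 \<le> \<gamma> * (1 + \<eta>)"
    and H1: "(1 + \<eta>) * (1 - \<xi>) * ln (real p) \<le> \<mu> * (1 - \<rho>)"
    and H3: "(1 + \<eta>) * \<xi> * ln (real p) \<le> \<mu> * \<rho> * D_gamma 1 (\<beta> / \<rho>)"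
  shows "real p * ((1 - q + q * \<rho> * (\<beta> / \<rho>)) ^ n / (\<beta> / \<rho>) powr (\<beta> * \<mu>))
    \<le> exp (- (\<eta> / 2) * ln (real p))"
proof -
  let ?L = "ln (real p)" and ?l = "ln (\<beta> / \<rho>)"
  have base: "1 - q + q * \<rho> * (\<beta> / \<rho>) = 1 + - q * (1 - \<beta>)"
    using \<beta> by (simp add: field_simps)
  have "q * (1 - \<beta>) \<le> 1"
    using q \<beta> by (intro mult_le_one) auto
  then have "real p * ((1 - q + q * \<rho> * (\<beta> / \<rho>)) ^ n / (\<beta> / \<rho>) powr (\<beta> * \<mu>))
      \<le> exp (?L + real n * (- q * (1 - \<beta>)) - \<beta> * \<mu> * ?l)"
    unfolding base using p \<beta> by (intro mult_pow_div_powr_le_exp) auto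
  also have "\<dots> \<le> exp (- (\<eta> / 2) * ?L)"
  proof -
    have "\<gamma> * (\<beta> * \<mu> * ?l) \<le> \<beta> * \<mu> * ?l"
      using \<gamma> \<beta> \<mu> by (intro mult_left_le_one_le mult_nonneg_nonneg) auto
    moreover have "\<gamma> * ((1 + \<eta>) * ?L) \<le> \<gamma> * (\<mu> * (1 - \<beta>) + \<beta> * \<mu> * ?l)"
    proof (intro mult_left_mono \<gamma>)
      have "\<mu> * (1 - \<rho>) + \<mu> * \<rho> * D_gamma 1 (\<beta> / \<rho>) = \<mu> * (1 - \<beta>) + \<beta> * \<mu> * ?l"
        using \<beta> by (simp add: D_gamma_def field_simps)
      moreover have "(1 + \<eta>) * ?L = (1 + \<eta>) * (1 - \<xi>) * ?L + (1 + \<eta>) * \<xi> * ?L"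
        by (simp add: algebra_simps)
      ultimately show "(1 + \<eta>) * ?L \<le> \<mu> * (1 - \<beta>) + \<beta> * \<mu> * ?l"
        using H1 H3 by linarith
    qed
    moreover have "(1 + \<eta> / 2) * ?L \<le> \<gamma> * ((1 + \<eta>) * ?L)"
      using \<gamma>(3) p by (simp add: mult.assoc[symmetric] mult_right_mono)
    moreover have "\<mu> * \<gamma> * (1 - \<beta>) \<le> real n * q * (1 - \<beta>)"
      using isolation \<beta> by (intro mult_right_mono) auto
    ultimately show ?thesis
      by (simp add: algebra_simps)
  qed
  finally show ?thesis .
qed

lemma few_clean_term_le:
  fixes r \<mu> \<gamma> :: real
  assumes \<beta>': "0 < \<beta>'" "\<beta>' < 1" and r: "0 \<le> r" "r \<le> 1" and k: "1 \<le> k" and \<eta>: "0 < \<eta>"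
    and isolation: "\<mu> * \<gamma> \<le> real n * r" and \<mu>: "0 \<le> \<mu>" and \<gamma>: "\<gamma> \<le> 1"
    and H2: "(1 + \<eta> / 2) * ln (real k) \<le> \<mu> * D_gamma 1 \<beta>'"
    and H5: "1 - \<gamma> \<le> D_gamma 1 \<beta>' * ((\<eta> / 4) / (1 + \<eta> / 2))"
  shows "real k * ((1 - r + r * \<beta>') ^ n / \<beta>' powr (\<beta>' * \<mu>)) \<le> exp (- (\<eta> / 4) * ln (real k))"
proof -
  let ?L = "ln (real k)" and ?D = "D_gamma 1 \<beta>'"
  have "r * (1 - \<beta>') \<le> 1"
    using r \<beta>' by (intro mult_le_one) auto
  then have "real k * ((1 - r + r * \<beta>') ^ n / \<beta>' powr (\<beta>' * \<mu>))
      \<le> exp (?L + real n * (- r * (1 - \<beta>')) - \<beta>' * \<mu> * ln \<beta>')"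
    using k \<beta>' mult_pow_div_powr_le_exp[of "real k" "- r * (1 - \<beta>')" \<beta>' n "\<beta>' * \<mu>"]
    by (simp add: algebra_simps)
  also have "\<dots> \<le> exp (- (\<eta> / 4) * ?L)"
  proof -
    have "\<mu> * \<gamma> * (1 - \<beta>') + \<beta>' * \<mu> * ln \<beta>' = \<mu> * (?D - (1 - \<gamma>) * (1 - \<beta>'))"
      by (simp add: D_gamma_def algebra_simps)
    also have "\<dots> \<ge> \<mu> * (?D - ?D * ((\<eta> / 4) / (1 + \<eta> / 2)))"
    proof -
      have "(1 - \<gamma>) * (1 - \<beta>') \<le> (1 - \<gamma>) * 1"
        using \<gamma> \<beta>' by (intro mult_left_mono) auto
      then show ?thesis
        using H5 \<mu> by (intro mult_left_mono) auto
    qed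
    also have "\<mu> * (?D - ?D * ((\<eta> / 4) / (1 + \<eta> / 2))) = (\<mu> * ?D) * ((1 + \<eta> / 4) / (1 + \<eta> / 2))"
      using \<eta> by (simp add: field_simps)
    also have "\<dots> \<ge> ((1 + \<eta> / 2) * ?L) * ((1 + \<eta> / 4) / (1 + \<eta> / 2))"
      using H2 \<eta> by (intro mult_right_mono) auto
    also have "((1 + \<eta> / 2) * ?L) * ((1 + \<eta> / 4) / (1 + \<eta> / 2)) = (1 + \<eta> / 4) * ?L"
      using \<eta> by (simp add: field_simps)
    finally have "(1 + \<eta> / 4) * ?L \<le> \<mu> * \<gamma> * (1 - \<beta>') + \<beta>' * \<mu> * ln \<beta>'" .
    moreover have "\<mu> * \<gamma> * (1 - \<beta>') \<le> real n * r * (1 - \<beta>')"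
      using isolation \<beta>' by (intro mult_right_mono) auto
    ultimately show ?thesis
      by (simp add: algebra_simps)
  qed
  finally show ?thesis .
qed

lemma spurious_term_le:
  fixes q \<mu> \<gamma> :: real
  assumes \<rho>: "0 < \<rho>" "\<rho> < 1" and q: "0 \<le> q" "q \<le> 1" and p: "1 \<le> p" and \<xi>: "\<xi> < 1"
    and isolation: "\<mu> * \<gamma> \<le> real n * q" and \<gamma>: "0 \<le> \<gamma>" "1 \<le> \<gamma> * (1 + \<eta>)"
    and H1: "(1 + \<eta>) * (1 - \<xi>) * ln (real p) \<le> \<mu> * (1 - \<rho>)"
  shows "real p * (1 - q * (1 - \<rho>)) ^ n / real p powr \<xi>' \<le> exp (- (\<xi>' - \<xi>) * ln (real p))"
proof -
  let ?L = "ln (real p)"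
  have "q * (1 - \<rho>) \<le> 1"
    using q \<rho> by (intro mult_le_one) auto
  then have "real p * (1 - q * (1 - \<rho>)) ^ n / real p powr \<xi>'
      \<le> exp (?L + real n * (- (q * (1 - \<rho>))) - \<xi>' * ?L)"
    using p mult_pow_div_powr_le_exp[of "real p" "- (q * (1 - \<rho>))" "real p" n \<xi>'] by simp
  also have "\<dots> \<le> exp (- (\<xi>' - \<xi>) * ?L)"
  proof -
    have "1 * ((1 - \<xi>) * ?L) \<le> (\<gamma> * (1 + \<eta>)) * ((1 - \<xi>) * ?L)"
      using \<gamma> \<xi> p by (intro mult_right_mono) auto
    also have "\<dots> \<le> \<gamma> * (\<mu> * (1 - \<rho>))"
      using H1 \<gamma> by (simp add: mult.assoc mult_left_mono)
    also have "\<dots> \<le> real n * q * (1 - \<rho>)"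
      using isolation \<rho> by (simp add: mult.commute mult.left_commute mult_right_mono)
    finally show ?thesis
      by (simp add: algebra_simps)
  qed
  finally show ?thesis .
qed

lemma interference_term_le:
  fixes x \<mu> \<delta> M :: real
  assumes k: "1 \<le> k" and \<delta>: "0 < \<delta>" and M: "0 \<le> M"
    and small: "real n * ((exp (4 / \<delta>) - 1) * M * x\<^sup>2) \<le> 2 * \<mu>" and \<mu>: "ln (real k) \<le> \<mu>"
  shows "real k * ((1 - x + x * (1 + (exp (4 / \<delta>) - 1) * M * x)) ^ n / exp (4 / \<delta>) powr (\<delta> * \<mu>))
    \<le> exp (- ln (real k))"
proof -
  have base: "1 - x + x * (1 + (exp (4 / \<delta>) - 1) * M * x) = 1 + (exp (4 / \<delta>) - 1) * M * x\<^sup>2"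
    by (simp add: power2_eq_square algebra_simps)
  have "0 \<le> (exp (4 / \<delta>) - 1) * M * x\<^sup>2"
    using \<delta> M by simp
  then have "real k * ((1 - x + x * (1 + (exp (4 / \<delta>) - 1) * M * x)) ^ n / exp (4 / \<delta>) powr (\<delta> * \<mu>))
      \<le> exp (ln (real k) + real n * ((exp (4 / \<delta>) - 1) * M * x\<^sup>2) - \<delta> * \<mu> * ln (exp (4 / \<delta>)))"
    unfolding base using k by (intro mult_pow_div_powr_le_exp) auto
  also have "\<dots> \<le> exp (- ln (real k))"
    using small \<mu> \<delta> by simp
  finally show ?thesis .
qed

lemma mu_bounds_of_n_DD:
  fixes \<nu> \<rho> \<beta> \<xi> \<eta> :: real
  assumes \<nu>: "0 < \<nu>" and \<rho>: "0 < \<rho>" "\<rho> < \<beta>" "\<beta> < 1" and k: "1 \<le> k" and \<eta>: "0 < \<eta>"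
    and n: "(1 + \<eta>) * n_DD p k \<nu> \<rho> \<beta> \<xi> \<le> real n"
  defines "\<mu> \<equiv> real n * \<nu> * exp (- \<nu>) / real k"
  shows "(1 + \<eta>) * (1 - \<xi>) * ln (real p) \<le> \<mu> * (1 - \<rho>)"
    and "(1 + \<eta>) * ln (real k) \<le> \<mu> * D_gamma 1 \<beta>"
    and "(1 + \<eta>) * \<xi> * ln (real p) \<le> \<mu> * \<rho> * D_gamma 1 (\<beta> / \<rho>)"
    and "ln (real k) \<le> \<mu>"
proof -
  define c where "c = \<nu> * exp (- \<nu>)"
  have c: "0 < c"
    using \<nu> by (simp add: c_def)
  have from_max: "(1 + \<eta>) * A * L \<le> \<mu> * B"
    if B: "0 < B" and le: "A / (c * B) * real k * L \<le> n_DD p k \<nu> \<rho> \<beta> \<xi>" for A B L :: real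
  proof -
    have "(1 + \<eta>) * (A / (c * B) * real k * L) \<le> real n"
      using le n \<eta> by (smt (verit) mult_left_mono)
    then have "(1 + \<eta>) * (A / (c * B) * real k * L) * (c * B / real k) \<le> real n * (c * B / real k)"
      using c B k by (intro mult_right_mono) auto
    moreover have "(1 + \<eta>) * (A / (c * B) * real k * L) * (c * B / real k) = (1 + \<eta>) * A * L"
      using c B k by (simp add: field_simps)
    moreover have "real n * (c * B / real k) = \<mu> * B"
      by (simp add: \<mu>_def c_def)
    ultimately show ?thesis
      by simp
  qed
  have nDD: "n_DD p k \<nu> \<rho> \<beta> \<xi> = max ((1 - \<xi>) / ((1 - \<rho>) * c) * real k * ln (real p))
     (max (1 / (c * D_gamma 1 \<beta>) * real k * ln (real k)) (\<xi> / (c * \<rho> * D_gamma 1 (\<beta> / \<rho>)) * real k * ln (real p)))"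
    by (simp add: n_DD_def Let_def c_def)
  show "(1 + \<eta>) * (1 - \<xi>) * ln (real p) \<le> \<mu> * (1 - \<rho>)"
    using from_max[of "1 - \<rho>" "1 - \<xi>" "ln (real p)"] \<rho> by (simp add: nDD mult.commute)
  show H2: "(1 + \<eta>) * ln (real k) \<le> \<mu> * D_gamma 1 \<beta>"
    using from_max[of "D_gamma 1 \<beta>" 1 "ln (real k)"] D_gamma_one_pos[of \<beta>] \<rho> by (simp add: nDD)
  show "(1 + \<eta>) * \<xi> * ln (real p) \<le> \<mu> * \<rho> * D_gamma 1 (\<beta> / \<rho>)"
    using from_max[of "\<rho> * D_gamma 1 (\<beta> / \<rho>)" \<xi> "ln (real p)"] D_gamma_one_pos[of "\<beta> / \<rho>"] \<rho>
    by (simp add: nDD mult.assoc)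
  have "0 \<le> \<mu>"
    using \<nu> by (simp add: \<mu>_def)
  then have "\<mu> * D_gamma 1 \<beta> \<le> \<mu>"
    using D_gamma_one_le_one[of \<beta>] \<rho> by (simp add: mult_left_le)
  moreover have "ln (real k) \<le> (1 + \<eta>) * ln (real k)"
    using k \<eta> by (simp add: algebra_simps)
  ultimately show "ln (real k) \<le> \<mu>"
    using H2 by linarith
qed

lemma dd_error_prob_le_instance:
  fixes \<nu> \<rho> \<beta> \<beta>' \<xi>' :: real and n :: nat
  assumes \<rho>: "0 < \<rho>" "\<rho> < \<beta>" and \<beta>': "\<beta> < \<beta>'" "\<beta>' < 1"
    and \<nu>: "0 < \<nu>" and k: "1 \<le> k" "k \<le> p" "2 * \<nu> \<le> real k"
  defines "\<mu> \<equiv> real n * \<nu> * exp (- \<nu>) / real k" and "x \<equiv> \<nu> / real k" and "\<delta> \<equiv> \<beta>' - \<beta>"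
  shows "dd_error_prob p k n \<nu> \<rho> \<beta> \<le>
      real p * ((1 - x * (1 - x) ^ k + x * (1 - x) ^ k * \<rho> * (\<beta> / \<rho>)) ^ n / (\<beta> / \<rho>) powr (\<beta> * \<mu>))
    + real k * ((1 - x * (1 - x) ^ (k - 1) + x * (1 - x) ^ (k - 1) * \<beta>') ^ n / \<beta>' powr (\<beta>' * \<mu>))
    + real p * (1 - x * (1 - x) ^ k * (1 - \<rho>)) ^ n / real p powr \<xi>'
    + real k * ((1 - x + x * (1 + (exp (4 / \<delta>) - 1) * real p powr \<xi>' * x)) ^ n / exp (4 / \<delta>) powr (\<delta> * \<mu>))"
proof -
  have threshold: "\<beta> * real n * \<nu> * exp (- \<nu>) / real k = \<beta> * \<mu>"
    by (simp add: \<mu>_def)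
  have "0 \<le> x" "x \<le> 1"
    using \<nu> k by (auto simp: x_def field_simps)
  then show ?thesis
    unfolding x_def using k \<rho> \<beta>' order.trans[OF k(1,2)]
    by (intro dd_error_prob_le[where \<nu> = \<nu> and \<beta> = \<beta> and n = n and k = k, unfolded threshold])
      (auto simp: \<delta>_def left_diff_distrib)
qed

lemma dd_error_prob_le_decay:
  fixes \<rho> \<nu> \<beta> \<xi> \<eta> \<beta>' \<xi>' :: real
  assumes \<rho>: "0 < \<rho>" "\<rho> < \<beta>" "\<beta> < 1" and \<nu>: "0 < \<nu>" and \<xi>: "\<xi> < 1" and \<eta>: "0 < \<eta>"
    and \<beta>': "\<beta> < \<beta>'" "\<beta>' < 1" "(1 + \<eta> / 2) / (1 + \<eta>) * D_gamma 1 \<beta> < D_gamma 1 \<beta>'"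
    and k: "1 \<le> k" "k \<le> p" "2 * \<nu> \<le> real k"
    and n: "(1 + \<eta>) * n_DD p k \<nu> \<rho> \<beta> \<xi> \<le> real n"
    and \<gamma>1: "(1 + \<eta> / 2) / (1 + \<eta>) \<le> exp (- 2 * \<nu>\<^sup>2 / real k)"
    and \<gamma>2: "1 - D_gamma 1 \<beta>' * ((\<eta> / 4) / (1 + \<eta> / 2)) \<le> exp (- 2 * \<nu>\<^sup>2 / real k)"
    and M: "(exp (4 / (\<beta>' - \<beta>)) - 1) * \<nu> * exp \<nu> * real p powr \<xi>' / real k \<le> 2"
  shows "dd_error_prob p k n \<nu> \<rho> \<beta> \<le> exp (- (\<eta> / 2) * ln (real p)) + exp (- (\<eta> / 4) * ln (real k))
     + exp (- (\<xi>' - \<xi>) * ln (real p)) + exp (- ln (real k))"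
proof -
  define \<mu> where "\<mu> = real n * \<nu> * exp (- \<nu>) / real k"
  define \<gamma> where "\<gamma> = exp (- 2 * \<nu>\<^sup>2 / real k)"
  define \<delta> where "\<delta> = \<beta>' - \<beta>"
  let ?x = "\<nu> / real k"
  have \<mu>: "0 \<le> \<mu>"
    using \<nu> by (simp add: \<mu>_def)
  have \<gamma>: "0 \<le> \<gamma>" "\<gamma> \<le> 1"
    using k by (auto simp: \<gamma>_def)
  note H = mu_bounds_of_n_DD[OF \<nu> \<rho> k(1) \<eta> n, folded \<mu>_def]
  have p: "1 \<le> p"
    using k by simp
  note iso = isolation_prob_bounds[OF less_imp_le[OF \<nu>] k(1,3)]
  have q: "0 \<le> ?x * (1 - ?x) ^ k" "?x * (1 - ?x) ^ k \<le> 1"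
    and r: "0 \<le> ?x * (1 - ?x) ^ (k - 1)" "?x * (1 - ?x) ^ (k - 1) \<le> 1"
    using iso(2-4) by linarith+
  have isolation: "\<mu> * \<gamma> \<le> real n * (?x * (1 - ?x) ^ k)"
    using mult_left_mono[OF iso(1), of "real n"] by (simp add: \<mu>_def \<gamma>_def mult.assoc)
  then have isolation': "\<mu> * \<gamma> \<le> real n * (?x * (1 - ?x) ^ (k - 1))"
    using iso(3) by (meson mult_left_mono of_nat_0_le_iff order_trans)
  have H2': "(1 + \<eta> / 2) * ln (real k) \<le> \<mu> * D_gamma 1 \<beta>'"
  proof -
    have "(1 + \<eta> / 2) * ln (real k) = (1 + \<eta> / 2) / (1 + \<eta>) * ((1 + \<eta>) * ln (real k))"
      using \<eta> by (simp add: field_simps)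
    also have "\<dots> \<le> (1 + \<eta> / 2) / (1 + \<eta>) * (\<mu> * D_gamma 1 \<beta>)"
      using H(2) \<eta> by (intro mult_left_mono) auto
    also have "\<dots> = \<mu> * ((1 + \<eta> / 2) / (1 + \<eta>) * D_gamma 1 \<beta>)"
      by simp
    also have "\<dots> \<le> \<mu> * D_gamma 1 \<beta>'"
      using \<beta>'(3) \<mu> by (intro mult_left_mono) auto
    finally show ?thesis .
  qed
  have \<gamma>_half: "1 + \<eta> / 2 \<le> \<gamma> * (1 + \<eta>)"
    using \<gamma>1 \<eta> by (simp add: \<gamma>_def divide_le_eq)
  have "dd_error_prob p k n \<nu> \<rho> \<beta> \<le>
      real p * ((1 - ?x * (1 - ?x) ^ k + ?x * (1 - ?x) ^ k * \<rho> * (\<beta> / \<rho>)) ^ n / (\<beta> / \<rho>) powr (\<beta> * \<mu>))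
    + real k * ((1 - ?x * (1 - ?x) ^ (k - 1) + ?x * (1 - ?x) ^ (k - 1) * \<beta>') ^ n / \<beta>' powr (\<beta>' * \<mu>))
    + real p * (1 - ?x * (1 - ?x) ^ k * (1 - \<rho>)) ^ n / real p powr \<xi>'
    + real k * ((1 - ?x + ?x * (1 + (exp (4 / \<delta>) - 1) * real p powr \<xi>' * ?x)) ^ n
        / exp (4 / \<delta>) powr (\<delta> * \<mu>))"
    unfolding \<mu>_def \<delta>_def by (rule dd_error_prob_le_instance[OF \<rho>(1,2) \<beta>'(1,2) \<nu> k])
  also have "\<dots> \<le> exp (- (\<eta> / 2) * ln (real p)) + exp (- (\<eta> / 4) * ln (real k))
     + exp (- (\<xi>' - \<xi>) * ln (real p)) + exp (- ln (real k))"
  proof (intro add_mono)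
    show "real p * ((1 - ?x * (1 - ?x) ^ k + ?x * (1 - ?x) ^ k * \<rho> * (\<beta> / \<rho>)) ^ n / (\<beta> / \<rho>) powr (\<beta> * \<mu>))
        \<le> exp (- (\<eta> / 2) * ln (real p))"
      by (rule false_accept_term_le[OF \<rho> q p isolation \<mu> \<gamma> \<gamma>_half H(1,3)])
    show "real k * ((1 - ?x * (1 - ?x) ^ (k - 1) + ?x * (1 - ?x) ^ (k - 1) * \<beta>') ^ n / \<beta>' powr (\<beta>' * \<mu>))
        \<le> exp (- (\<eta> / 4) * ln (real k))"
      using \<gamma>2 unfolding \<gamma>_def[symmetric]
      by (intro few_clean_term_le[OF _ \<beta>'(2) r k(1) \<eta> isolation' \<mu> \<gamma>(2) H2']) (use \<rho> \<beta>' in auto)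
    show "real p * (1 - ?x * (1 - ?x) ^ k * (1 - \<rho>)) ^ n / real p powr \<xi>' \<le> exp (- (\<xi>' - \<xi>) * ln (real p))"
      using \<gamma>_half \<eta> \<rho>
      by (intro spurious_term_le[OF \<rho>(1) _ q p \<xi> isolation \<gamma>(1) _ H(1)]) (auto simp: algebra_simps)
    have "real n * ((exp (4 / \<delta>) - 1) * real p powr \<xi>' * ?x\<^sup>2) =
        \<mu> * ((exp (4 / \<delta>) - 1) * \<nu> * exp \<nu> * real p powr \<xi>' / real k)"
      using k by (simp add: \<mu>_def power2_eq_square exp_minus field_simps)
    also have "\<dots> \<le> \<mu> * 2"
      using M \<mu> by (intro mult_left_mono) (auto simp: \<delta>_def)
    finally show "real k * ((1 - ?x + ?x * (1 + (exp (4 / \<delta>) - 1) * real p powr \<xi>' * ?x)) ^ n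
        / exp (4 / \<delta>) powr (\<delta> * \<mu>)) \<le> exp (- ln (real k))"
      using k \<beta>' H(4) by (intro interference_term_le) (auto simp: \<delta>_def)
  qed
  finally show ?thesis .
qed

lemma Theta_powr_asymptotics:
  fixes k :: "nat \<Rightarrow> nat" and \<theta> \<xi> :: real
  assumes k: "(\<lambda>p. real (k p)) \<in> \<Theta>(\<lambda>p. real p powr \<theta>)" and \<theta>: "0 < \<theta>" "\<theta> < 1" and \<xi>: "\<xi> < \<theta>"
  shows "filterlim (\<lambda>p. real (k p)) at_top at_top"
    and "\<forall>\<^sub>F p in at_top. k p \<le> p"
    and "((\<lambda>p. real p powr \<xi> / real (k p)) \<longlongrightarrow> 0) at_top"
proof -
  have small: "(\<lambda>p. real p powr a) \<in> o(\<lambda>p. real p powr b)" if "a < b" for a b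
    using powr_smallo_iff[OF filterlim_real_sequentially] that by simp
  have "filterlim (\<lambda>p. real p powr \<theta>) at_infinity at_top"
    using \<theta>(1) by real_asymp
  then have "(\<lambda>p. real p powr \<theta>) \<in> \<omega>(\<lambda>_. 1)"
    by (simp add: smallomega_1_conv_filterlim)
  then have "(\<lambda>p. real (k p)) \<in> \<omega>(\<lambda>_. 1)"
    using landau_omega.big_small_trans k by (blast dest: bigthetaD2)
  then show "filterlim (\<lambda>p. real (k p)) at_top at_top"
    using filterlim_at_infinity_imp_norm_at_top by (fastforce simp: smallomega_1_conv_filterlim)
  have "(\<lambda>p. real (k p)) \<in> o(\<lambda>p. real p powr 1)"
    using landau_o.big_small_trans[OF bigthetaD1[OF k] small[OF \<theta>(2)]] .
  from landau_o.smallD[OF this zero_less_one] show "\<forall>\<^sub>F p in at_top. k p \<le> p"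
    by eventually_elim simp
  have "(\<lambda>p. real p powr \<xi>) \<in> o(\<lambda>p. real (k p))"
    using landau_o.small_big_trans[OF small[OF \<xi>] k[THEN bigthetaD2, unfolded bigomega_iff_bigo]] .
  then show "((\<lambda>p. real p powr \<xi> / real (k p)) \<longlongrightarrow> 0) at_top"
    by (rule smalloD_tendsto)
qed

lemma tendsto_exp_neg_mult_at_top:
  fixes c :: real
  assumes "0 < c" "filterlim f at_top F"
  shows "((\<lambda>x. exp (- c * f x)) \<longlongrightarrow> 0) F"
proof -
  have "filterlim (\<lambda>x. - (c * f x)) at_bot F"
    using filterlim_tendsto_pos_mult_at_top[OF tendsto_const assms] by (simp add: filterlim_uminus_at_top)
  from filterlim_compose[OF exp_at_bot this] show ?thesis
    by simp
qed

lemma dd_error_prob_eventually_le: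
  fixes k n :: "nat \<Rightarrow> nat" and \<rho> \<nu> \<beta> \<xi> \<eta> \<beta>' \<xi>' :: real
  assumes \<rho>: "0 < \<rho>" "\<rho> < \<beta>" "\<beta> < 1" and \<nu>: "0 < \<nu>" and \<xi>: "\<xi> < 1" and \<eta>: "0 < \<eta>"
    and \<beta>': "\<beta> < \<beta>'" "\<beta>' < 1" "(1 + \<eta> / 2) / (1 + \<eta>) * D_gamma 1 \<beta> < D_gamma 1 \<beta>'"
    and k: "filterlim (\<lambda>p. real (k p)) at_top at_top" "\<forall>\<^sub>F p in at_top. k p \<le> p"
      "((\<lambda>p. real p powr \<xi>' / real (k p)) \<longlongrightarrow> 0) at_top"
    and n: "\<forall>\<^sub>F p in at_top. (1 + \<eta>) * n_DD p (k p) \<nu> \<rho> \<beta> \<xi> \<le> real (n p)"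
  shows "\<forall>\<^sub>F p in at_top. dd_error_prob p (k p) (n p) \<nu> \<rho> \<beta> \<le> exp (- (\<eta> / 2) * ln (real p))
      + exp (- (\<eta> / 4) * ln (real (k p))) + exp (- (\<xi>' - \<xi>) * ln (real p)) + exp (- ln (real (k p)))"
proof -
  have "((\<lambda>p. exp (- 2 * \<nu>\<^sup>2 / real (k p))) \<longlongrightarrow> exp 0) at_top"
    by (intro tendsto_exp tendsto_divide_0[OF tendsto_const] filterlim_at_top_imp_at_infinity k(1))
  then have \<gamma>_lim: "((\<lambda>p. exp (- 2 * \<nu>\<^sup>2 / real (k p))) \<longlongrightarrow> 1) at_top"
    by simp
  have \<gamma>: "\<forall>\<^sub>F p in at_top. c \<le> exp (- 2 * \<nu>\<^sup>2 / real (k p))" if "c < 1" for c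
    using order_tendstoD(1)[OF \<gamma>_lim that] by (auto elim: eventually_mono)
  have \<tau>: "(1 + \<eta> / 2) / (1 + \<eta>) < 1"
    using \<eta> by simp
  have "0 < D_gamma 1 \<beta>'"
    using \<beta>' \<rho> by (intro D_gamma_one_pos) auto
  then have \<tau>': "1 - D_gamma 1 \<beta>' * ((\<eta> / 4) / (1 + \<eta> / 2)) < 1"
    using \<eta> by simp
  have "((\<lambda>p. (exp (4 / (\<beta>' - \<beta>)) - 1) * \<nu> * exp \<nu> * (real p powr \<xi>' / real (k p))) \<longlongrightarrow> 0) at_top"
    using tendsto_mult_right_zero[OF k(3)] by simp
  from order_tendstoD(2)[OF this, of 2]
  have M: "\<forall>\<^sub>F p in at_top. (exp (4 / (\<beta>' - \<beta>)) - 1) * \<nu> * exp \<nu> * real p powr \<xi>' / real (k p) \<le> 2"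
    by (auto elim: eventually_mono)
  have "\<forall>\<^sub>F p in at_top. max 1 (2 * \<nu>) \<le> real (k p)"
    using k(1) unfolding filterlim_at_top by blast
  with n k(2) \<gamma>[OF \<tau>] \<gamma>[OF \<tau>'] M show ?thesis
  proof eventually_elim
    case (elim p)
    have "1 \<le> k p" "2 * \<nu> \<le> real (k p)"
      using elim(6) by auto
    then show ?case
      using dd_error_prob_le_decay[OF \<rho> \<nu> \<xi> \<eta> \<beta>' _ elim(2) _ elim(1,3,4,5)] by simp
  qed
qed

theorem theorem3:
  fixes \<rho> \<theta> \<nu> \<beta> \<xi> \<eta> :: real and k n :: "nat \<Rightarrow> nat"
  assumes "0 < \<rho>" "\<rho> < 1" "0 < \<theta>" "\<theta> < 1" "0 < \<nu>"
    and "\<rho> < \<beta>" "\<beta> < 1" "0 < \<xi>" "\<xi> < \<theta>" "0 < \<eta>"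
    and "(\<lambda>p. real (k p)) \<in> \<Theta>(\<lambda>p. real p powr \<theta>)"
    and "\<forall>\<^sub>F p in at_top. real (n p) \<ge> (1 + \<eta>) * n_DD p (k p) \<nu> \<rho> \<beta> \<xi>"
  shows "(\<lambda>p. dd_error_prob p (k p) (n p) \<nu> \<rho> \<beta>) \<longlonglongrightarrow> 0"
proof -
  have \<tau>: "(1 + \<eta> / 2) / (1 + \<eta>) < 1"
    using assms(10) by simp
  obtain \<beta>' where \<beta>': "\<beta> < \<beta>'" "\<beta>' < 1" "(1 + \<eta> / 2) / (1 + \<eta>) * D_gamma 1 \<beta> < D_gamma 1 \<beta>'"
    using exists_D_gamma_one_gt[OF _ assms(7) \<tau>] assms by auto
  define \<xi>' where "\<xi>' = (\<xi> + \<theta>) / 2"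
  have \<xi>': "\<xi> < \<xi>'" "\<xi>' < \<theta>" and \<xi>1: "\<xi> < 1"
    using assms by (auto simp: \<xi>'_def)
  note k = Theta_powr_asymptotics[OF assms(11,3,4) \<xi>'(2)]
  have "((\<lambda>p. exp (- (\<eta> / 2) * ln (real p)) + exp (- (\<eta> / 4) * ln (real (k p)))
      + exp (- (\<xi>' - \<xi>) * ln (real p)) + exp (- 1 * ln (real (k p)))) \<longlongrightarrow> 0 + 0 + 0 + 0) at_top"
    using assms(10) \<xi>'(1)
    by (intro tendsto_add tendsto_exp_neg_mult_at_top filterlim_compose[OF ln_at_top filterlim_real_sequentially]
        filterlim_compose[OF ln_at_top k(1)]) auto
  then have lim: "((\<lambda>p. exp (- (\<eta> / 2) * ln (real p)) + exp (- (\<eta> / 4) * ln (real (k p)))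
      + exp (- (\<xi>' - \<xi>) * ln (real p)) + exp (- ln (real (k p)))) \<longlongrightarrow> 0) at_top"
    by simp
  have "\<forall>\<^sub>F p in at_top. 0 \<le> dd_error_prob p (k p) (n p) \<nu> \<rho> \<beta>"
    by (simp add: dd_error_prob_def)
  from tendsto_sandwich[OF this dd_error_prob_eventually_le[OF assms(1,6,7,5) \<xi>1 assms(10) \<beta>' k assms(12)]
      tendsto_const lim]
  show ?thesis .
qed

end
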